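(* Let $\Lambda=C_{K,L}$ be the $K\times L$ cylindrical grid ($K,L\ge2$, $K$ even) and $(\mathcal X,H,q)$ the hard-core energy landscape on it. Then (a) $\widetilde\Gamma(\mathcal X\setminus\{\mathbf e,\mathbf o\})\le\min\{K/2,L\}$; (b) $\Gamma(\mathbf e,\{\mathbf o\})=\min\{K/2,L\}+1=\widetilde\Gamma(\mathcal X\setminus\{\mathbf o\})$.
   Context: Cylindrical grid $C_{K,L}$: sites $(v_1,v_2)$ with $0\le v_1\le L-1$, $0\le v_2\le K-1$; $v,w$ adjacent iff $|v_1-w_1|+|v_2-w_2|=1$, or $v_1=w_1$ and $\{v_2,w_2\}=\{0,K-1\}$ (each column is a cycle). Even sites: $v_1+v_2$ even. Hard-core landscape: $\mathcal X$ = set of $\sigma\in\{0,1\}^\Lambda$ with $\sigma(v)\sigma(w)=0$ for adjacent $v,w$; $H(\sigma)=-\sum_v\sigma(v)$; $q(\sigma,\sigma')=1/(KL)$ if $\sigma,\sigma'$ differ in exactly one site, $0$ if in more, $q(\sigma,\sigma)=1-\sum_{\eta\ne\sigma}q(\sigma,\eta)$. $\mathbf e$ (resp. $\mathbf o$) has particles exactly at even (resp. odd) sites. Paths: finite sequences with consecutive $q>0$; $\Phi(x,y)$ = minimum over paths from $x$ to $y$ of the maximal $H$ along the path; $\Phi(B,D)=\min_{x\in B,y\in D}\Phi(x,y)$. $\partial B=\{y\notin B:\exists x\in B,q(x,y)>0\}$. A cycle is a nonempty $C$ which is a singleton or a set of at least two elements, connected by paths inside it, with $\max_CH<\min_{\partial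 C}H$; depth $\Gamma(C)=\Phi(C,\mathcal X\setminus C)-\min_CH$. $C_A(x)=\{x\}\cup\{z:\Phi(x,z)<\Phi(x,A)\}$, $\Gamma(x,A)=\Gamma(C_A(x))$. For nonempty $B\subsetneq\mathcal X$, $\widetilde\Gamma(B)=\max\{\Gamma(C):C$ maximal cycle contained in $B\}$. *)

theory Defs
  imports Complex_Main
begin

definition is_path :: "'a set \<Rightarrow> ('a \<Rightarrow> 'a \<Rightarrow> real) \<Rightarrow> 'a list \<Rightarrow> bool" where
  "is_path X q p \<longleftrightarrow> p \<noteq> [] \<and> set p \<subseteq> X \<and>
     (\<forall>i. Suc i < length p \<longrightarrow> q (p ! i) (p ! Suc i) > 0)"

definition Phi :: "'a set \<Rightarrow> ('a \<Rightarrow> int) \<Rightarrow> ('a \<Rightarrow> 'a \<Rightarrow> real) \<Rightarrow> 'a \<Rightarrow> 'a \<Rightarrow> int" where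
  "Phi X H q x y = Min {Max (H ` set p) | p. is_path X q p \<and> hd p = x \<and> last p = y}"

definition PhiSet :: "'a set \<Rightarrow> ('a \<Rightarrow> int) \<Rightarrow> ('a \<Rightarrow> 'a \<Rightarrow> real) \<Rightarrow> 'a set \<Rightarrow> 'a set \<Rightarrow> int" where
  "PhiSet X H q B D = Min {Phi X H q x y | x y. x \<in> B \<and> y \<in> D}"

definition bdry :: "'a set \<Rightarrow> ('a \<Rightarrow> 'a \<Rightarrow> real) \<Rightarrow> 'a set \<Rightarrow> 'a set" where
  "bdry X q B = {y \<in> X. y \<notin> B \<and> (\<exists>x\<in>B. q x y > 0)}"

definition is_cycle :: "'a set \<Rightarrow> ('a \<Rightarrow> int) \<Rightarrow> ('a \<Rightarrow> 'a \<Rightarrow> real) \<Rightarrow> 'a set \<Rightarrow> bool" where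
  "is_cycle X H q C \<longleftrightarrow> C \<noteq> {} \<and> C \<subseteq> X \<and>
     ((\<exists>x. C = {x}) \<or>
      ((\<forall>x\<in>C. \<forall>y\<in>C. \<exists>p. is_path X q p \<and> set p \<subseteq> C \<and> hd p = x \<and> last p = y) \<and>
       (\<forall>w\<in>C. \<forall>z\<in>bdry X q C. H w < H z)))"

definition depth :: "'a set \<Rightarrow> ('a \<Rightarrow> int) \<Rightarrow> ('a \<Rightarrow> 'a \<Rightarrow> real) \<Rightarrow> 'a set \<Rightarrow> int" where
  "depth X H q C = PhiSet X H q C (X - C) - Min (H ` C)"

definition cycA :: "'a set \<Rightarrow> ('a \<Rightarrow> int) \<Rightarrow> ('a \<Rightarrow> 'a \<Rightarrow> real) \<Rightarrow> 'a \<Rightarrow> 'a set \<Rightarrow> 'a set" where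
  "cycA X H q x A = {x} \<union> {z \<in> X. Phi X H q x z < PhiSet X H q {x} A}"

definition GammaA :: "'a set \<Rightarrow> ('a \<Rightarrow> int) \<Rightarrow> ('a \<Rightarrow> 'a \<Rightarrow> real) \<Rightarrow> 'a \<Rightarrow> 'a set \<Rightarrow> int" where
  "GammaA X H q x A = depth X H q (cycA X H q x A)"

definition maximal_cycle_in :: "'a set \<Rightarrow> ('a \<Rightarrow> int) \<Rightarrow> ('a \<Rightarrow> 'a \<Rightarrow> real) \<Rightarrow> 'a set \<Rightarrow> 'a set \<Rightarrow> bool" where
  "maximal_cycle_in X H q B C \<longleftrightarrow> is_cycle X H q C \<and> C \<subseteq> B \<and>
     \<not> (\<exists>C'. is_cycle X H q C' \<and> C' \<subseteq> B \<and> C \<subset> C')"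

definition GammaTilde :: "'a set \<Rightarrow> ('a \<Rightarrow> int) \<Rightarrow> ('a \<Rightarrow> 'a \<Rightarrow> real) \<Rightarrow> 'a set \<Rightarrow> int" where
  "GammaTilde X H q B = Max {depth X H q C | C. maximal_cycle_in X H q B C}"

text \<open>Sites (v1,v2) with v1 < L, v2 < K. Configurations sigma in {0,1}^Lambda are encoded
  by their set of occupied sites (a subset of Lambda).\<close>
definition sites :: "nat \<Rightarrow> nat \<Rightarrow> (nat \<times> nat) set" where
  "sites K L = {(v1, v2). v1 < L \<and> v2 < K}"

definition cyl_adj :: "nat \<Rightarrow> nat \<times> nat \<Rightarrow> nat \<times> nat \<Rightarrow> bool" where
  "cyl_adj K v w \<longleftrightarrow>
     \<bar>int (fst v) - int (fst w)\<bar> + \<bar>int (snd v) - int (snd w)\<bar> = 1 \<or>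
     (fst v = fst w \<and> {snd v, snd w} = {0, K - 1})"

definition hc_X :: "nat \<Rightarrow> nat \<Rightarrow> (nat \<times> nat) set set" where
  "hc_X K L = {\<sigma>. \<sigma> \<subseteq> sites K L \<and>
      (\<forall>v\<in>\<sigma>. \<forall>w\<in>\<sigma>. \<not> cyl_adj K v w)}"

definition hc_H :: "(nat \<times> nat) set \<Rightarrow> int" where
  "hc_H \<sigma> = - int (card \<sigma>)"

definition ndiff :: "(nat \<times> nat) set \<Rightarrow> (nat \<times> nat) set \<Rightarrow> nat" where
  "ndiff \<sigma> \<sigma>' = card ((\<sigma> - \<sigma>') \<union> (\<sigma>' - \<sigma>))"

definition hc_q :: "nat \<Rightarrow> nat \<Rightarrow> (nat \<times> nat) set \<Rightarrow> (nat \<times> nat) set \<Rightarrow> real" where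
  "hc_q K L \<sigma> \<sigma>' =
     (if ndiff \<sigma> \<sigma>' = 1 then 1 / real (K * L)
      else if \<sigma> = \<sigma>' then 1 - (\<Sum>\<eta>\<in>{\<eta> \<in> hc_X K L. ndiff \<sigma> \<eta> = 1}. 1 / real (K * L))
      else 0)"

definition even_conf :: "nat \<Rightarrow> nat \<Rightarrow> (nat \<times> nat) set" where
  "even_conf K L = {v \<in> sites K L. even (fst v + snd v)}"

definition odd_conf :: "nat \<Rightarrow> nat \<Rightarrow> (nat \<times> nat) set" where
  "odd_conf K L = {v \<in> sites K L. odd (fst v + snd v)}"

end

theory Submission
  imports Defs
begin

text \<open>Write \<open>\<Gamma> = min (K div 2) L\<close>. Every configuration can be driven to one of the two
  checkerboards \<open>e\<close>, \<open>o\<close> without rising more than \<open>\<Gamma>\<close> above its own energy: impose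
  the sites of one parity one by one, column by column if \<open>K div 2 \<le> L\<close> and row by row
  otherwise, paying for each removed neighbour with the site imposed just before it. Only the
  first column, respectively the two rows adjacent across the seam, cannot be paid for; they
  contain at most \<open>\<Gamma>\<close> sites, and choosing the parity so that one of them is empty saves one.
  Conversely, tile the cylinder by vertical dominoes, so that the energy above \<open>e\<close> is the
  number of empty dominoes. While this number stays at most \<open>\<Gamma>\<close> along a path from \<open>e\<close>, some
  row of dominoes stays filled with even sites (a full row is monochromatic, and a full column
  forbids even and odd rows at once), which \<open>o\<close> violates; hence \<open>\<Phi>(e, o) = H(e) + \<Gamma> + 1\<close>.
  In any finite symmetric landscape these two facts determine the depths of the maximal cycles
  in question.\<close>

section \<open>Communication heights and cycles in a finite landscape\<close>

definition reach_le ::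
    "'a set \<Rightarrow> ('a \<Rightarrow> int) \<Rightarrow> ('a \<Rightarrow> 'a \<Rightarrow> real) \<Rightarrow> int \<Rightarrow> 'a \<Rightarrow> 'a \<Rightarrow> bool" where
  "reach_le X H q h a b \<longleftrightarrow>
     (\<exists>p. is_path X q p \<and> hd p = a \<and> last p = b \<and> (\<forall>s\<in>set p. H s \<le> h))"

lemma is_path_snoc:
  assumes "is_path X q p" "c \<in> X" "q (last p) c > 0"
  shows "is_path X q (p @ [c])"
  unfolding is_path_def
proof (intro conjI allI impI)
  show "p @ [c] \<noteq> []" by simp
  show "set (p @ [c]) \<subseteq> X" using assms unfolding is_path_def by auto
  fix i assume i: "Suc i < length (p @ [c])"
  show "0 < q ((p @ [c]) ! i) ((p @ [c]) ! Suc i)"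
  proof (cases "Suc i < length p")
    case True thus ?thesis using assms(1) unfolding is_path_def by (auto simp: nth_append)
  next
    case False
    hence "i = length p - 1" "p \<noteq> []" using i assms(1) unfolding is_path_def by auto
    thus ?thesis using assms(3) False i by (auto simp: nth_append last_conv_nth)
  qed
qed

lemma is_path_snocD:
  assumes "is_path X q (xs @ [x])" "xs \<noteq> []"
  shows "is_path X q xs \<and> q (last xs) x > 0 \<and> x \<in> X"
proof -
  have X: "set (xs @ [x]) \<subseteq> X"
    and q: "\<forall>i. Suc i < length (xs @ [x]) \<longrightarrow> q ((xs @ [x]) ! i) ((xs @ [x]) ! Suc i) > 0"
    using assms(1) unfolding is_path_def by auto
  have "is_path X q xs" unfolding is_path_def
  proof (intro conjI allI impI)
    show "xs \<noteq> []" by fact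
    show "set xs \<subseteq> X" using X by auto
    fix i assume "Suc i < length xs"
    thus "q (xs ! i) (xs ! Suc i) > 0" using q[rule_format, of i] by (auto simp: nth_append)
  qed
  moreover have "q (last xs) x > 0"
    using q[rule_format, of "length xs - 1"] assms(2) by (auto simp: nth_append last_conv_nth)
  ultimately show ?thesis using X by auto
qed

lemma is_path_ConsD:
  assumes "is_path X q (x # xs)" "xs \<noteq> []"
  shows "is_path X q xs \<and> q x (hd xs) > 0 \<and> x \<in> X"
proof -
  have X: "set (x # xs) \<subseteq> X"
    and q: "\<forall>i. Suc i < length (x # xs) \<longrightarrow> q ((x # xs) ! i) ((x # xs) ! Suc i) > 0"
    using assms(1) unfolding is_path_def by auto
  have "is_path X q xs" unfolding is_path_def
  proof (intro conjI allI impI)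
    show "xs \<noteq> []" by fact
    show "set xs \<subseteq> X" using X by auto
    fix i assume "Suc i < length xs"
    thus "q (xs ! i) (xs ! Suc i) > 0" using q[rule_format, of "Suc i"] by auto
  qed
  moreover have "q x (hd xs) > 0"
    using q[rule_format, of 0] assms(2) by (auto simp: hd_conv_nth)
  ultimately show ?thesis using X by auto
qed

lemma is_path_mono: "is_path S q p \<Longrightarrow> S \<subseteq> X \<Longrightarrow> is_path X q p"
  unfolding is_path_def by auto

lemma is_path_restrict: "is_path X q p \<Longrightarrow> set p \<subseteq> S \<Longrightarrow> is_path S q p"
  unfolding is_path_def by auto

lemma is_path_leaves:
  "is_path X q p \<Longrightarrow> hd p \<in> S \<Longrightarrow> last p \<notin> S \<Longrightarrow>
     \<exists>i. Suc i < length p \<and> p ! i \<in> S \<and> p ! Suc i \<notin> S \<and> p ! i \<in> X \<and> p ! Suc i \<in> X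
         \<and> q (p ! i) (p ! Suc i) > 0"
proof (induction p)
  case Nil thus ?case by (simp add: is_path_def)
next
  case (Cons x xs)
  show ?case
  proof (cases "xs = []")
    case True thus ?thesis using Cons by simp
  next
    case False
    have xs: "is_path X q xs \<and> q x (hd xs) > 0 \<and> x \<in> X" using is_path_ConsD[OF Cons(2) False] .
    have "hd xs \<in> X" using xs False unfolding is_path_def by auto
    show ?thesis
    proof (cases "hd xs \<in> S")
      case True
      then obtain i where "Suc i < length xs \<and> xs ! i \<in> S \<and> xs ! Suc i \<notin> S \<and> xs ! i \<in> X
          \<and> xs ! Suc i \<in> X \<and> q (xs ! i) (xs ! Suc i) > 0"
        using Cons xs False by auto
      thus ?thesis by (intro exI[of _ "Suc i"]) auto
    next
      case False
      thus ?thesis using Cons xs \<open>hd xs \<in> X\<close> \<open>xs \<noteq> []\<close> by (intro exI[of _ 0]) (auto simp: hd_conv_nth)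
    qed
  qed
qed

lemma reach_le_refl: "a \<in> X \<Longrightarrow> H a \<le> h \<Longrightarrow> reach_le X H q h a a"
  unfolding reach_le_def is_path_def by (rule exI[of _ "[a]"]) auto

lemma reach_le_step:
  "reach_le X H q h a b \<Longrightarrow> c \<in> X \<Longrightarrow> q b c > 0 \<Longrightarrow> H c \<le> h \<Longrightarrow> reach_le X H q h a c"
proof -
  assume "reach_le X H q h a b" "c \<in> X" "q b c > 0" "H c \<le> h"
  then obtain p where "is_path X q p" "hd p = a" "last p = b" "\<forall>s\<in>set p. H s \<le> h"
    unfolding reach_le_def by blast
  with \<open>c \<in> X\<close> \<open>q b c > 0\<close> \<open>H c \<le> h\<close> show ?thesis
    unfolding reach_le_def
    by (intro exI[of _ "p @ [c]"]) (auto simp: is_path_snoc dest: is_path_def[THEN iffD1])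
qed

lemma reach_le_extend:
  "is_path X q p \<Longrightarrow> \<forall>s\<in>set p. H s \<le> h \<Longrightarrow> reach_le X H q h a (hd p) \<Longrightarrow> w \<in> set p \<Longrightarrow>
   reach_le X H q h a w"
proof (induction p arbitrary: w rule: rev_induct)
  case Nil thus ?case by (simp add: is_path_def)
next
  case (snoc x xs)
  show ?case
  proof (cases "xs = []")
    case True thus ?thesis using snoc by simp
  next
    case False
    have xs: "is_path X q xs \<and> q (last xs) x > 0 \<and> x \<in> X" using is_path_snocD[OF snoc(2) False] .
    have to_xs: "reach_le X H q h a v" if "v \<in> set xs" for v
      using snoc xs that False by auto
    show ?thesis
    proof (cases "w \<in> set xs")
      case True thus ?thesis using to_xs by simp
    next
      case False
      hence "w = x" using snoc by auto
      thus ?thesis using reach_le_step[OF to_xs[of "last xs"]] xs snoc(3) \<open>xs \<noteq> []\<close> by auto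
    qed
  qed
qed

lemma reach_le_trans: "reach_le X H q h a b \<Longrightarrow> reach_le X H q h b c \<Longrightarrow> reach_le X H q h a c"
proof -
  assume ab: "reach_le X H q h a b" and "reach_le X H q h b c"
  then obtain p where p: "is_path X q p" "hd p = b" "last p = c" "\<forall>s\<in>set p. H s \<le> h"
    unfolding reach_le_def by blast
  have "last p \<in> set p" using p(1) unfolding is_path_def by simp
  thus ?thesis using reach_le_extend[OF p(1,4)] ab p(2,3) by simp
qed

lemma reach_le_mono: "reach_le X H q h a b \<Longrightarrow> h \<le> h' \<Longrightarrow> reach_le X H q h' a b"
  unfolding reach_le_def by force

lemma reach_le_endpoints: "reach_le X H q h a b \<Longrightarrow> a \<in> X \<and> b \<in> X \<and> H a \<le> h \<and> H b \<le> h"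
  unfolding reach_le_def is_path_def by (auto intro: hd_in_set last_in_set)

lemma reach_le_sym:
  assumes sym: "\<And>a b. a \<in> X \<Longrightarrow> b \<in> X \<Longrightarrow> q a b > 0 \<Longrightarrow> q b a > 0"
    and ab: "reach_le X H q h a b"
  shows "reach_le X H q h b a"
proof -
  have "reach_le X H q h (last p) (hd p)" if "is_path X q p" "\<forall>s\<in>set p. H s \<le> h" for p
    using that
  proof (induction p)
    case Nil thus ?case by (simp add: is_path_def)
  next
    case (Cons x xs)
    show ?case
    proof (cases "xs = []")
      case True thus ?thesis using Cons by (auto intro!: reach_le_refl simp: is_path_def)
    next
      case False
      have xs: "is_path X q xs \<and> q x (hd xs) > 0 \<and> x \<in> X" using is_path_ConsD[OF Cons(2) False] .
      have "hd xs \<in> X" using xs False unfolding is_path_def by auto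
      hence "q (hd xs) x > 0" using sym xs by auto
      thus ?thesis using reach_le_step[of X H q h "last xs" "hd xs" x] Cons xs False by auto
    qed
  qed
  thus ?thesis using ab unfolding reach_le_def by blast
qed

locale landscape =
  fixes X :: "'a set" and H :: "'a \<Rightarrow> int" and q :: "'a \<Rightarrow> 'a \<Rightarrow> real"
  assumes finite_X: "finite X"
    and q_sym: "\<And>a b. a \<in> X \<Longrightarrow> b \<in> X \<Longrightarrow> q a b > 0 \<Longrightarrow> q b a > 0"
    and connected: "\<And>a b. a \<in> X \<Longrightarrow> b \<in> X \<Longrightarrow> \<exists>h. reach_le X H q h a b"
begin

abbreviation path_heights :: "'a \<Rightarrow> 'a \<Rightarrow> int set" where
  "path_heights a b \<equiv> {Max (H ` set p) | p. is_path X q p \<and> hd p = a \<and> last p = b}"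

lemma finite_path_heights: "finite (path_heights a b)"
proof -
  have "path_heights a b \<subseteq> H ` X"
  proof
    fix v assume "v \<in> path_heights a b"
    then obtain p where p: "is_path X q p" "v = Max (H ` set p)" by auto
    have "v \<in> H ` set p" using p by (auto simp: is_path_def intro!: Max_in)
    thus "v \<in> H ` X" using p(1) unfolding is_path_def by auto
  qed
  thus ?thesis using finite_X by (simp add: finite_subset)
qed

lemma Phi_le: "reach_le X H q h a b \<Longrightarrow> Phi X H q a b \<le> h"
proof -
  assume "reach_le X H q h a b"
  then obtain p where p: "is_path X q p" "hd p = a" "last p = b" "\<forall>s\<in>set p. H s \<le> h"
    unfolding reach_le_def by blast
  have "Phi X H q a b \<le> Max (H ` set p)"
    unfolding Phi_def using p finite_path_heights by (intro Min_le) auto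
  also have "\<dots> \<le> h" using p by (auto simp: is_path_def)
  finally show ?thesis .
qed

lemma reach_le_Phi: "a \<in> X \<Longrightarrow> b \<in> X \<Longrightarrow> reach_le X H q (Phi X H q a b) a b"
proof -
  assume ab: "a \<in> X" "b \<in> X"
  obtain h where "reach_le X H q h a b" using connected[OF ab] by blast
  hence "path_heights a b \<noteq> {}" unfolding reach_le_def by auto
  hence "Phi X H q a b \<in> path_heights a b"
    unfolding Phi_def using finite_path_heights by (intro Min_in)
  then obtain p where p: "is_path X q p" "hd p = a" "last p = b" "Phi X H q a b = Max (H ` set p)"
    by auto
  have "\<forall>s\<in>set p. H s \<le> Phi X H q a b" using p by (auto simp: is_path_def)
  thus ?thesis using p unfolding reach_le_def by blast
qed

lemma Phi_ge_H: "a \<in> X \<Longrightarrow> b \<in> X \<Longrightarrow> H a \<le> Phi X H q a b \<and> H b \<le> Phi X H q a b"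
  by (drule (1) reach_le_Phi) (simp add: reach_le_endpoints)

lemma Phi_triangle:
  assumes "a \<in> X" "b \<in> X" "c \<in> X"
  shows "Phi X H q a c \<le> max (Phi X H q a b) (Phi X H q b c)"
proof -
  let ?h = "max (Phi X H q a b) (Phi X H q b c)"
  have "reach_le X H q ?h a b" using reach_le_mono[OF reach_le_Phi[OF assms(1,2)]] by simp
  moreover have "reach_le X H q ?h b c" using reach_le_mono[OF reach_le_Phi[OF assms(2,3)]] by simp
  ultimately show ?thesis by (intro Phi_le) (rule reach_le_trans)
qed

lemma Phi_refl: "a \<in> X \<Longrightarrow> Phi X H q a a = H a"
  using Phi_le[OF reach_le_refl[of a X H "H a" q]] Phi_ge_H[of a a] by auto

lemma Phi_adjacent: "a \<in> X \<Longrightarrow> b \<in> X \<Longrightarrow> q a b > 0 \<Longrightarrow> Phi X H q a b \<le> max (H a) (H b)"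
  by (intro Phi_le reach_le_step[OF reach_le_refl]) auto

lemma Phi_ge_if_paths_cross:
  assumes "a \<in> X" "b \<in> X"
    and "\<And>p. is_path X q p \<Longrightarrow> hd p = a \<Longrightarrow> last p = b \<Longrightarrow> \<exists>s\<in>set p. h \<le> H s"
  shows "h \<le> Phi X H q a b"
proof -
  obtain p where "is_path X q p" "hd p = a" "last p = b" "\<forall>s\<in>set p. H s \<le> Phi X H q a b"
    using reach_le_Phi[OF assms(1,2)] unfolding reach_le_def by blast
  thus ?thesis using assms(3) by force
qed

lemma finite_Phi_pairs: "B \<subseteq> X \<Longrightarrow> D \<subseteq> X \<Longrightarrow> finite {Phi X H q x y | x y. x \<in> B \<and> y \<in> D}"
proof -
  assume "B \<subseteq> X" "D \<subseteq> X"
  hence "finite (B \<times> D)" using finite_X by (meson finite_SigmaI finite_subset)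
  moreover have "{Phi X H q x y | x y. x \<in> B \<and> y \<in> D} = (\<lambda>(x, y). Phi X H q x y) ` (B \<times> D)"
    by auto
  ultimately show ?thesis by simp
qed

lemma PhiSet_le: "B \<subseteq> X \<Longrightarrow> D \<subseteq> X \<Longrightarrow> x \<in> B \<Longrightarrow> y \<in> D \<Longrightarrow> PhiSet X H q B D \<le> Phi X H q x y"
  unfolding PhiSet_def by (rule Min_le[OF finite_Phi_pairs]) auto

lemma PhiSet_ge:
  assumes "B \<subseteq> X" "D \<subseteq> X" "x \<in> B" "y \<in> D"
    and "\<And>x y. x \<in> B \<Longrightarrow> y \<in> D \<Longrightarrow> h \<le> Phi X H q x y"
  shows "h \<le> PhiSet X H q B D"
  unfolding PhiSet_def using assms by (subst Min_ge_iff[OF finite_Phi_pairs]) auto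

lemma depth_le:
  assumes "C \<subseteq> X" "C \<noteq> {}" "\<And>x. x \<in> C \<Longrightarrow> \<exists>y \<in> X - C. Phi X H q x y \<le> H x + b"
  shows "depth X H q C \<le> b"
proof -
  have "Min (H ` C) \<in> H ` C" using finite_subset[OF assms(1) finite_X] assms(2) by (intro Min_in) auto
  then obtain x where x: "x \<in> C" "H x = Min (H ` C)" by (metis imageE)
  obtain y where y: "y \<in> X - C" "Phi X H q x y \<le> H x + b" using assms(3)[OF x(1)] by blast
  have "PhiSet X H q C (X - C) \<le> Phi X H q x y" using assms(1) x y by (intro PhiSet_le) auto
  thus ?thesis unfolding depth_def using x y by linarith
qed

lemma finite_cycles: "finite {C. is_cycle X H q C}"
proof -
  have "{C. is_cycle X H q C} \<subseteq> Pow X" unfolding is_cycle_def by blast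
  thus ?thesis using finite_X by (simp add: finite_subset)
qed

lemma maximal_cycle_exists: "B \<subseteq> X \<Longrightarrow> x \<in> B \<Longrightarrow> \<exists>C. maximal_cycle_in X H q B C"
proof -
  assume B: "B \<subseteq> X" "x \<in> B"
  define S where "S = {C. is_cycle X H q C \<and> C \<subseteq> B}"
  have fin: "finite S" using finite_cycles unfolding S_def by (rule finite_subset[rotated]) blast
  have "{x} \<in> S" using B unfolding S_def is_cycle_def by auto
  hence "card ` S \<noteq> {}" by blast
  hence "Max (card ` S) \<in> card ` S" using fin by (intro Max_in) auto
  then obtain C where C: "C \<in> S" "card C = Max (card ` S)" by (metis imageE)
  have max: "card C' \<le> card C" if "C' \<in> S" for C' using that fin C(2) by simp
  have "\<not> (C \<subset> C')" if "C' \<in> S" for C'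
  proof
    assume "C \<subset> C'"
    moreover have "C' \<subseteq> X" using that B unfolding S_def by blast
    hence "finite C'" using finite_X by (rule finite_subset)
    ultimately have "card C < card C'" using \<open>C \<subset> C'\<close> by (simp add: psubset_card_mono)
    thus False using max[OF that] by simp
  qed
  hence "maximal_cycle_in X H q B C" using C unfolding maximal_cycle_in_def S_def by blast
  thus ?thesis by blast
qed

lemma finite_maximal_cycle_depths: "finite {depth X H q C | C. maximal_cycle_in X H q B C}"
proof -
  have "finite {C. maximal_cycle_in X H q B C}"
    using finite_cycles by (rule finite_subset[rotated]) (auto simp: maximal_cycle_in_def)
  thus ?thesis by (simp add: setcompr_eq_image)
qed

lemma GammaTilde_le:
  assumes "B \<subseteq> X" "x \<in> B" "\<And>C. maximal_cycle_in X H q B C \<Longrightarrow> depth X H q C \<le> b"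
  shows "GammaTilde X H q B \<le> b"
proof -
  obtain C where "maximal_cycle_in X H q B C" using maximal_cycle_exists assms(1,2) by blast
  thus ?thesis unfolding GammaTilde_def using assms(3)
    by (subst Max_le_iff[OF finite_maximal_cycle_depths]) auto
qed

lemma GammaTilde_eqI:
  assumes "maximal_cycle_in X H q B C0" "depth X H q C0 = b"
    and "\<And>C. maximal_cycle_in X H q B C \<Longrightarrow> depth X H q C \<le> b"
  shows "GammaTilde X H q B = b"
proof -
  have "b \<le> GammaTilde X H q B"
    unfolding GammaTilde_def using assms(1,2) by (intro Max_ge[OF finite_maximal_cycle_depths]) blast
  moreover have "GammaTilde X H q B \<le> b"
    unfolding GammaTilde_def using assms
    by (subst Max_le_iff[OF finite_maximal_cycle_depths]) blast+
  ultimately show ?thesis by simp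
qed

end


locale ground_state_landscape = landscape +
  fixes ground target
  assumes ground_in: "ground \<in> X" and target_in: "target \<in> X"
    and ground_min: "\<And>z. z \<in> X \<Longrightarrow> H ground \<le> H z"
    and ground_below_Phi: "H ground < Phi X H q ground target"
begin

definition valley :: "'a set" where "valley = cycA X H q ground {target}"

lemma valley_eq: "valley = {z \<in> X. Phi X H q ground z < Phi X H q ground target}"
  unfolding valley_def cycA_def PhiSet_def
  using Phi_refl[OF ground_in] ground_below_Phi ground_in by auto

lemma valley_subset: "valley \<subseteq> X"
  by (auto simp: valley_eq)

lemma ground_in_valley: "ground \<in> valley"
  using ground_in Phi_refl[OF ground_in] ground_below_Phi by (auto simp: valley_eq)

lemma target_notin_valley: "target \<notin> valley"
  by (auto simp: valley_eq)

lemma finite_valley: "finite valley"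
  using finite_subset[OF valley_subset finite_X] .

lemma H_less_on_valley: "x \<in> valley \<Longrightarrow> H x < Phi X H q ground target"
  using Phi_ge_H[OF ground_in, of x] by (auto simp: valley_eq)

lemma reach_le_inside_valley: "z \<in> valley \<Longrightarrow> reach_le valley H q (Phi X H q ground z) ground z"
proof -
  assume z: "z \<in> valley"
  hence zX: "z \<in> X" and zl: "Phi X H q ground z < Phi X H q ground target" by (auto simp: valley_eq)
  obtain p where p: "is_path X q p" "hd p = ground" "last p = z"
    "\<forall>s\<in>set p. H s \<le> Phi X H q ground z"
    using reach_le_Phi[OF ground_in zX] unfolding reach_le_def by blast
  have "set p \<subseteq> valley"
  proof
    fix w assume w: "w \<in> set p"
    have "reach_le X H q (Phi X H q ground z) ground (hd p)"
      using reach_le_refl[OF ground_in] Phi_ge_H[OF ground_in zX] p(2) by simp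
    hence "reach_le X H q (Phi X H q ground z) ground w"
      using reach_le_extend[OF p(1,4) _ w] by simp
    hence "Phi X H q ground w \<le> Phi X H q ground z" by (rule Phi_le)
    moreover have "w \<in> X" using w p(1) unfolding is_path_def by auto
    ultimately show "w \<in> valley" using zl by (auto simp: valley_eq)
  qed
  hence "is_path valley q p" using is_path_restrict[OF p(1)] by blast
  thus ?thesis unfolding reach_le_def using p by blast
qed

lemma valley_path_connected:
  "x \<in> valley \<Longrightarrow> y \<in> valley \<Longrightarrow> \<exists>p. is_path X q p \<and> set p \<subseteq> valley \<and> hd p = x \<and> last p = y"
proof -
  assume xy: "x \<in> valley" "y \<in> valley"
  let ?h = "max (Phi X H q ground x) (Phi X H q ground y)"
  have sym: "\<And>a b. a \<in> valley \<Longrightarrow> b \<in> valley \<Longrightarrow> q a b > 0 \<Longrightarrow> q b a > 0"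
    using q_sym valley_subset by blast
  have r1: "reach_le valley H q ?h ground x"
    using reach_le_mono[OF reach_le_inside_valley[OF xy(1)]] by simp
  have r2: "reach_le valley H q ?h ground y"
    using reach_le_mono[OF reach_le_inside_valley[OF xy(2)]] by simp
  have "reach_le valley H q ?h x y" using reach_le_trans[OF reach_le_sym[OF sym r1] r2] .
  then obtain p where p: "is_path valley q p" "hd p = x" "last p = y" unfolding reach_le_def by blast
  have "is_path X q p" using is_path_mono[OF p(1) valley_subset] .
  moreover have "set p \<subseteq> valley" using p(1) unfolding is_path_def by simp
  ultimately show ?thesis using p by blast
qed

lemma H_boundary_valley_ge: "z \<in> bdry X q valley \<Longrightarrow> Phi X H q ground target \<le> H z"
proof (rule ccontr)
  assume z: "z \<in> bdry X q valley" and nz: "\<not> Phi X H q ground target \<le> H z"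
  from z obtain x where x: "x \<in> valley" "q x z > 0" and zX: "z \<in> X" and zn: "z \<notin> valley"
    unfolding bdry_def by blast
  have xX: "x \<in> X" using x valley_subset by blast
  have "Phi X H q ground z \<le> max (Phi X H q ground x) (Phi X H q x z)"
    using Phi_triangle[OF ground_in xX zX] .
  moreover have "Phi X H q x z \<le> max (H x) (H z)" using Phi_adjacent[OF xX zX x(2)] .
  moreover have "Phi X H q ground x < Phi X H q ground target" using x(1) by (auto simp: valley_eq)
  moreover have "H x < Phi X H q ground target" using H_less_on_valley[OF x(1)] .
  ultimately have "Phi X H q ground z < Phi X H q ground target" using nz by linarith
  hence "z \<in> valley" using zX by (auto simp: valley_eq)
  thus False using zn by blast
qed

lemma is_cycle_valley: "is_cycle X H q valley"
  unfolding is_cycle_def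
proof (intro conjI disjI2)
  show "valley \<noteq> {}" using ground_in_valley by blast
  show "valley \<subseteq> X" by (rule valley_subset)
  show "\<forall>x\<in>valley. \<forall>y\<in>valley. \<exists>p. is_path X q p \<and> set p \<subseteq> valley \<and> hd p = x \<and> last p = y"
    using valley_path_connected by blast
  show "\<forall>w\<in>valley. \<forall>z\<in>bdry X q valley. H w < H z"
    using H_less_on_valley H_boundary_valley_ge by fastforce
qed

lemma cycle_subset_valley:
  assumes C: "is_cycle X H q C" "C \<subseteq> X - {target}" "ground \<in> C"
  shows "C \<subseteq> valley"
proof
  fix y assume "y \<in> C"
  show "y \<in> valley"
  proof (cases "\<exists>x. C = {x}")
    case True thus ?thesis using \<open>y \<in> C\<close> C(3) ground_in_valley by auto
  next
    case False
    hence conn: "\<forall>x\<in>C. \<forall>y\<in>C. \<exists>p. is_path X q p \<and> set p \<subseteq> C \<and> hd p = x \<and> last p = y"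
      and bdry_high: "\<forall>w\<in>C. \<forall>z\<in>bdry X q C. H w < H z"
      using C(1) unfolding is_cycle_def by blast+
    show ?thesis
    proof (rule ccontr)
      assume "y \<notin> valley"
      obtain p where p: "is_path X q p" "set p \<subseteq> C" "hd p = ground" "last p = y"
        using conn C(3) \<open>y \<in> C\<close> by blast
      obtain i where i: "Suc i < length p" "p ! i \<in> valley" "p ! Suc i \<notin> valley" "p ! Suc i \<in> X"
        "q (p ! i) (p ! Suc i) > 0"
        using is_path_leaves[of X q p valley] p ground_in_valley \<open>y \<notin> valley\<close> by auto
      hence "p ! Suc i \<in> bdry X q valley" unfolding bdry_def by blast
      hence exit_C: "Phi X H q ground target \<le> H (p ! Suc i)" by (rule H_boundary_valley_ge)
      have "p ! Suc i \<in> C" using i(1) p(2) nth_mem by blast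
      obtain p0 where p0: "is_path X q p0" "hd p0 = ground" "last p0 = target"
        "\<forall>s\<in>set p0. H s \<le> Phi X H q ground target"
        using reach_le_Phi[OF ground_in target_in] unfolding reach_le_def by blast
      obtain j where j: "Suc j < length p0" "p0 ! j \<in> C" "p0 ! Suc j \<notin> C" "p0 ! Suc j \<in> X"
        "q (p0 ! j) (p0 ! Suc j) > 0"
        using is_path_leaves[of X q p0 C] p0 C(2,3) by auto
      hence "p0 ! Suc j \<in> bdry X q C" unfolding bdry_def by blast
      hence "H (p ! Suc i) < H (p0 ! Suc j)" using bdry_high \<open>p ! Suc i \<in> C\<close> by blast
      moreover have "H (p0 ! Suc j) \<le> Phi X H q ground target" using p0(4) j(1) nth_mem by blast
      ultimately show False using exit_C by linarith
    qed
  qed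
qed

lemma maximal_cycle_valley: "maximal_cycle_in X H q (X - {target}) valley"
  unfolding maximal_cycle_in_def
  using is_cycle_valley valley_subset target_notin_valley cycle_subset_valley ground_in_valley
  by blast

lemma depth_valley: "depth X H q valley = Phi X H q ground target - H ground"
proof -
  have m: "Min (H ` valley) = H ground"
    using finite_valley ground_in_valley valley_subset ground_min by (intro Min_eqI) auto
  have "PhiSet X H q valley (X - valley) \<le> Phi X H q ground target"
    using valley_subset ground_in_valley target_in target_notin_valley by (intro PhiSet_le) auto
  moreover have "Phi X H q ground target \<le> PhiSet X H q valley (X - valley)"
  proof (rule PhiSet_ge)
    show "valley \<subseteq> X" "X - valley \<subseteq> X" "ground \<in> valley" "target \<in> X - valley"
      using valley_subset ground_in_valley target_in target_notin_valley by auto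
    fix x z assume xz: "x \<in> valley" "z \<in> X - valley"
    show "Phi X H q ground target \<le> Phi X H q x z"
    proof (rule ccontr)
      assume "\<not> ?thesis"
      moreover have "Phi X H q ground z \<le> max (Phi X H q ground x) (Phi X H q x z)"
        using Phi_triangle[OF ground_in, of x z] xz valley_subset by blast
      moreover have "Phi X H q ground x < Phi X H q ground target" using xz(1) by (auto simp: valley_eq)
      ultimately have "z \<in> valley" using xz(2) by (auto simp: valley_eq)
      thus False using xz by blast
    qed
  qed
  ultimately show ?thesis unfolding depth_def m by linarith
qed

lemma depth_le_if_ground_in:
  "C \<subseteq> X - {target} \<Longrightarrow> ground \<in> C \<Longrightarrow> depth X H q C \<le> Phi X H q ground target - H ground"
proof -
  assume C: "C \<subseteq> X - {target}" "ground \<in> C"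
  have CX: "C \<subseteq> X" using C by blast
  have m: "Min (H ` C) = H ground"
    using finite_subset[OF CX finite_X] C ground_min by (intro Min_eqI) auto
  have "PhiSet X H q C (X - C) \<le> Phi X H q ground target"
    using C target_in by (intro PhiSet_le) auto
  thus ?thesis unfolding depth_def m by linarith
qed

lemma depth_le_if_descent:
  assumes descent: "\<And>x. x \<in> X \<Longrightarrow> x \<noteq> ground \<Longrightarrow> x \<noteq> target \<Longrightarrow>
      \<exists>y\<in>{ground, target}. Phi X H q x y \<le> H x + b"
    and C: "C \<subseteq> X - {ground, target}" "C \<noteq> {}"
  shows "depth X H q C \<le> b"
proof (rule depth_le)
  show "C \<subseteq> X" "C \<noteq> {}" using C by auto
  fix x assume "x \<in> C"
  then obtain y where "y \<in> {ground, target}" "Phi X H q x y \<le> H x + b" using descent C by blast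
  moreover have "y \<in> X - C" using \<open>y \<in> {ground, target}\<close> C ground_in target_in by auto
  ultimately show "\<exists>y \<in> X - C. Phi X H q x y \<le> H x + b" by blast
qed

lemma Gamma_values:
  assumes descent: "\<And>x. x \<in> X \<Longrightarrow> x \<noteq> ground \<Longrightarrow> x \<noteq> target \<Longrightarrow>
      \<exists>y\<in>{ground, target}. Phi X H q x y \<le> H x + b"
    and barrier: "Phi X H q ground target - H ground = b + 1"
    and x0: "x0 \<in> X" "x0 \<noteq> ground" "x0 \<noteq> target"
  shows "GammaTilde X H q (X - {ground, target}) \<le> b \<and> GammaA X H q ground {target} = b + 1 \<and>
    GammaTilde X H q (X - {target}) = b + 1"
proof (intro conjI)
  show "GammaTilde X H q (X - {ground, target}) \<le> b"
    using x0 depth_le_if_descent[OF descent]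
    by (intro GammaTilde_le[of _ x0]) (auto simp: maximal_cycle_in_def is_cycle_def)
  show "GammaA X H q ground {target} = b + 1"
    unfolding GammaA_def valley_def[symmetric] depth_valley barrier ..
  show "GammaTilde X H q (X - {target}) = b + 1"
  proof (rule GammaTilde_eqI[OF maximal_cycle_valley])
    show "depth X H q valley = b + 1" using depth_valley barrier by simp
    fix C assume "maximal_cycle_in X H q (X - {target}) C"
    hence C: "C \<subseteq> X - {target}" "C \<noteq> {}" unfolding maximal_cycle_in_def is_cycle_def by blast+
    show "depth X H q C \<le> b + 1"
    proof (cases "ground \<in> C")
      case True thus ?thesis using depth_le_if_ground_in[OF C(1)] barrier by simp
    next
      case False
      hence "C \<subseteq> X - {ground, target}" using C by blast
      thus ?thesis using depth_le_if_descent[OF descent _ C(2)] by fastforce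
    qed
  qed
qed

end

section \<open>The hard-core landscape on the cylinder\<close>

locale cylinder =
  fixes K L :: nat
  assumes K_ge_2: "K \<ge> 2" and L_ge_2: "L \<ge> 2" and even_K: "even K"
begin

abbreviation n :: nat where "n \<equiv> K div 2"

abbreviation barrier :: nat where "barrier \<equiv> min n L"

lemma K_eq: "K = 2 * n" using even_K by simp

lemma n_pos: "n \<ge> 1" using K_ge_2 by simp

definition parity :: "nat \<times> nat \<Rightarrow> nat" where "parity v = (fst v + snd v) mod 2"

lemma parity_le_1: "parity v \<le> 1" unfolding parity_def by simp

lemma cyl_adj_sym: "cyl_adj K v w = cyl_adj K w v"
  unfolding cyl_adj_def by (auto simp: abs_minus_commute insert_commute)

lemma cyl_adj_cases:
  assumes "cyl_adj K (a1, a2) (b1, b2)"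
  shows "(a1 = b1 \<and> (a2 = b2 + 1 \<or> b2 = a2 + 1)) \<or> (a2 = b2 \<and> (a1 = b1 + 1 \<or> b1 = a1 + 1)) \<or>
    (a1 = b1 \<and> {a2, b2} = {0, K - 1})"
proof (cases "\<bar>int a1 - int b1\<bar> + \<bar>int a2 - int b2\<bar> = 1")
  case True thus ?thesis by linarith
next
  case False thus ?thesis using assms unfolding cyl_adj_def by auto
qed

lemma cyl_adj_wrap: "cyl_adj K (c, K - 1) (c, 0)"
  unfolding cyl_adj_def by (simp add: insert_commute)

lemma parity_cyl_adj: "cyl_adj K v w \<Longrightarrow> parity v \<noteq> parity w"
proof -
  assume adj: "cyl_adj K v w"
  obtain a1 a2 b1 b2 where v: "v = (a1, a2)" and w: "w = (b1, b2)" by (cases v, cases w) auto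
  consider "(a1 = b1 \<and> (a2 = b2 + 1 \<or> b2 = a2 + 1)) \<or> (a2 = b2 \<and> (a1 = b1 + 1 \<or> b1 = a1 + 1))"
    | "a1 = b1" "(a2 = 0 \<and> b2 = K - 1) \<or> (a2 = K - 1 \<and> b2 = 0)"
    using cyl_adj_cases[OF adj[unfolded v w]] by (auto simp: doubleton_eq_iff)
  thus ?thesis
  proof cases
    case 1 thus ?thesis unfolding parity_def v w by (elim disjE conjE; simp; presburger)
  next
    case 2
    have "K - 1 = Suc (2 * (n - 1))" using K_eq n_pos by simp
    hence "(a1 + (K - 1)) mod 2 \<noteq> a1 mod 2" by simp presburger
    thus ?thesis unfolding parity_def v w using 2 by auto
  qed
qed

lemma parity_cyl_adj_other: "P \<le> 1 \<Longrightarrow> parity w = 1 - P \<Longrightarrow> cyl_adj K w u \<Longrightarrow> parity u = P"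
  using parity_cyl_adj[of w u] parity_le_1[of u] by linarith

lemma finite_sites: "finite (sites K L)"
proof -
  have "sites K L \<subseteq> {0..<L} \<times> {0..<K}" unfolding sites_def by auto
  thus ?thesis using finite_subset by blast
qed

lemma hc_X_iff: "\<sigma> \<in> hc_X K L \<longleftrightarrow> \<sigma> \<subseteq> sites K L \<and> (\<forall>v\<in>\<sigma>. \<forall>w\<in>\<sigma>. \<not> cyl_adj K v w)"
  unfolding hc_X_def by simp

lemma hc_X_not_adj: "\<sigma> \<in> hc_X K L \<Longrightarrow> v \<in> \<sigma> \<Longrightarrow> w \<in> \<sigma> \<Longrightarrow> \<not> cyl_adj K v w"
  unfolding hc_X_iff by blast

lemma finite_hc_X: "finite (hc_X K L)"
proof -
  have "hc_X K L \<subseteq> Pow (sites K L)" unfolding hc_X_def by auto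
  thus ?thesis using finite_sites by (simp add: finite_subset)
qed

lemma hc_X_subset: "\<sigma> \<in> hc_X K L \<Longrightarrow> \<tau> \<subseteq> \<sigma> \<Longrightarrow> \<tau> \<in> hc_X K L"
  unfolding hc_X_iff by blast

lemma finite_conf: "\<sigma> \<in> hc_X K L \<Longrightarrow> finite \<sigma>"
  unfolding hc_X_iff using finite_sites finite_subset by blast

lemma ndiff_sym: "ndiff a b = ndiff b a"
  unfolding ndiff_def by (simp add: Un_commute)

lemma ndiff_insert: "v \<notin> \<sigma> \<Longrightarrow> ndiff \<sigma> (insert v \<sigma>) = 1"
proof -
  assume "v \<notin> \<sigma>"
  hence "(\<sigma> - insert v \<sigma>) \<union> (insert v \<sigma> - \<sigma>) = {v}" by blast
  thus ?thesis unfolding ndiff_def by simp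
qed

lemma ndiff_eq_1D:
  assumes "ndiff a b = 1"
  shows "(\<exists>v. v \<notin> a \<and> b = insert v a) \<or> (\<exists>v. v \<notin> b \<and> a = insert v b)"
proof -
  obtain v where v: "(a - b) \<union> (b - a) = {v}"
    using assms unfolding ndiff_def by (rule card_1_singletonE)
  hence only_v: "\<And>x. x \<in> a \<Longrightarrow> x \<notin> b \<Longrightarrow> x = v" "\<And>x. x \<in> b \<Longrightarrow> x \<notin> a \<Longrightarrow> x = v"
    by auto
  show ?thesis
  proof (cases "v \<in> a")
    case True
    hence "v \<notin> b" using v by blast
    moreover have "a = insert v b" using only_v True \<open>v \<notin> b\<close> by blast
    ultimately show ?thesis by blast
  next
    case False
    hence "v \<in> b" using v by blast
    moreover have "b = insert v a" using only_v False \<open>v \<in> b\<close> by blast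
    ultimately show ?thesis using False by blast
  qed
qed

lemma hc_q_pos: "ndiff a b = 1 \<Longrightarrow> hc_q K L a b > 0"
  using K_ge_2 L_ge_2 unfolding hc_q_def by simp

lemma hc_q_posD: "hc_q K L a b > 0 \<Longrightarrow> a \<noteq> b \<Longrightarrow> ndiff a b = 1"
  unfolding hc_q_def by (auto split: if_splits)

lemma hc_q_sym: "hc_q K L a b > 0 \<Longrightarrow> hc_q K L b a > 0"
proof (cases "a = b")
  case False
  assume "hc_q K L a b > 0"
  hence "ndiff b a = 1" using hc_q_posD False ndiff_sym by metis
  thus ?thesis by (rule hc_q_pos)
qed simp

abbreviation reach :: "int \<Rightarrow> (nat \<times> nat) set \<Rightarrow> (nat \<times> nat) set \<Rightarrow> bool" where
  "reach \<equiv> reach_le (hc_X K L) hc_H (hc_q K L)"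

lemma reach_remove:
  assumes "\<sigma> \<in> hc_X K L"
  shows "finite R \<Longrightarrow> R \<subseteq> \<sigma> \<Longrightarrow> reach (hc_H \<sigma> + int (card R)) \<sigma> (\<sigma> - R)"
proof (induction R rule: finite_induct)
  case empty thus ?case using assms by (auto intro!: reach_le_refl)
next
  case (insert r R)
  have IH: "reach (hc_H \<sigma> + int (card (insert r R))) \<sigma> (\<sigma> - R)"
    using insert by (auto intro: reach_le_mono)
  have split: "\<sigma> - R = insert r (\<sigma> - insert r R)" "r \<notin> \<sigma> - insert r R" using insert by auto
  have "hc_q K L (\<sigma> - R) (\<sigma> - insert r R) > 0"
    using hc_q_pos ndiff_insert[OF split(2)] ndiff_sym split(1) by metis
  moreover have "\<sigma> - insert r R \<in> hc_X K L" using hc_X_subset[OF assms] by blast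
  moreover have "hc_H (\<sigma> - insert r R) \<le> hc_H \<sigma> + int (card (insert r R))"
    using insert finite_conf[OF assms] card_mono[of \<sigma> "insert r R"]
    unfolding hc_H_def by (simp add: card_Diff_subset)
  ultimately show ?case using reach_le_step[OF IH] by blast
qed

lemma reach_hc_X: "a \<in> hc_X K L \<Longrightarrow> b \<in> hc_X K L \<Longrightarrow> \<exists>h. reach h a b"
proof -
  assume ab: "a \<in> hc_X K L" "b \<in> hc_X K L"
  let ?h = "max (hc_H a + int (card a)) (hc_H b + int (card b))"
  have "reach ?h a {}"
    using reach_le_mono[OF reach_remove[OF ab(1) finite_conf[OF ab(1)]]] by simp
  moreover have "reach ?h {} b"
    using reach_le_sym[OF hc_q_sym reach_le_mono[OF reach_remove[OF ab(2) finite_conf[OF ab(2)]]]]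
    by simp
  ultimately show ?thesis by (blast intro: reach_le_trans)
qed

sublocale landscape "hc_X K L" hc_H "hc_q K L"
  by unfold_locales (use finite_hc_X hc_q_sym reach_hc_X in auto)

end

lemma chain_propagate:
  fixes A B :: "nat \<Rightarrow> bool"
  assumes "\<And>i. i < N \<Longrightarrow> A i \<or> B i" "\<And>i. Suc i < N \<Longrightarrow> A i \<Longrightarrow> \<not> B (Suc i)" "A 0"
  shows "i < N \<Longrightarrow> A i"
  by (induction i) (use assms in auto)

context cylinder
begin

subsection \<open>Dominoes and the deficit\<close>

text \<open>The cylinder is tiled by the vertical dominoes \<open>{(c, 2i), (c, 2i+1)}\<close>, \<open>c < L\<close>, \<open>i < n\<close>;
  each holds at most one particle, so the energy above the ground state is the number of
  vacant dominoes.\<close>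

definition even_site :: "nat \<Rightarrow> nat \<Rightarrow> nat \<times> nat" where "even_site c i = (c, 2 * i + c mod 2)"

definition odd_site :: "nat \<Rightarrow> nat \<Rightarrow> nat \<times> nat" where "odd_site c i = (c, 2 * i + 1 - c mod 2)"

definition vacant :: "(nat \<times> nat) set \<Rightarrow> nat \<Rightarrow> nat \<Rightarrow> bool" where
  "vacant \<sigma> c i \<longleftrightarrow> (c, 2 * i) \<notin> \<sigma> \<and> (c, 2 * i + 1) \<notin> \<sigma>"

definition vacant_dominoes :: "(nat \<times> nat) set \<Rightarrow> (nat \<times> nat) set" where
  "vacant_dominoes \<sigma> = {(c, i). c < L \<and> i < n \<and> vacant \<sigma> c i}"

definition deficit :: "(nat \<times> nat) set \<Rightarrow> nat" where "deficit \<sigma> = card (vacant_dominoes \<sigma>)"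

definition even_row :: "(nat \<times> nat) set \<Rightarrow> nat \<Rightarrow> bool" where
  "even_row \<sigma> i \<longleftrightarrow> (\<forall>c<L. even_site c i \<in> \<sigma>)"

definition odd_row :: "(nat \<times> nat) set \<Rightarrow> nat \<Rightarrow> bool" where
  "odd_row \<sigma> i \<longleftrightarrow> (\<forall>c<L. odd_site c i \<in> \<sigma>)"

definition full_column :: "(nat \<times> nat) set \<Rightarrow> nat \<Rightarrow> bool" where
  "full_column \<sigma> c \<longleftrightarrow> (\<forall>i<n. \<not> vacant \<sigma> c i)"

lemma domino_sites_cases:
  "(even_site c i = (c, 2 * i) \<and> odd_site c i = (c, 2 * i + 1)) \<or>
   (even_site c i = (c, 2 * i + 1) \<and> odd_site c i = (c, 2 * i))"
  unfolding even_site_def odd_site_def by (cases "c mod 2 = 0") (simp_all add: not_mod_2_eq_0_eq_1)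

lemma fst_even_site [simp]: "fst (even_site c i) = c" and fst_odd_site [simp]: "fst (odd_site c i) = c"
  unfolding even_site_def odd_site_def by simp_all

lemma vacant_iff: "vacant \<sigma> c i \<longleftrightarrow> even_site c i \<notin> \<sigma> \<and> odd_site c i \<notin> \<sigma>"
  using domino_sites_cases[of c i] unfolding vacant_def by auto

lemma cyl_adj_domino: "cyl_adj K (even_site c i) (odd_site c i)"
  using domino_sites_cases[of c i] cyl_adj_sym unfolding cyl_adj_def by auto

lemma domino_sites_in_sites: "c < L \<Longrightarrow> i < n \<Longrightarrow> even_site c i \<in> sites K L \<and> odd_site c i \<in> sites K L"
  using domino_sites_cases[of c i] K_eq unfolding sites_def by auto

lemma parity_even_site: "parity (even_site c i) = 0"
  unfolding parity_def even_site_def by (simp; presburger)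

lemma parity_odd_site: "parity (odd_site c i) = 1"
  unfolding parity_def odd_site_def by (simp; presburger)

lemma vacant_mono: "vacant \<tau> c i \<Longrightarrow> \<sigma> \<subseteq> \<tau> \<Longrightarrow> vacant \<sigma> c i"
  unfolding vacant_def by blast

lemma vacant_dominoes_subset: "vacant_dominoes \<sigma> \<subseteq> {0..<L} \<times> {0..<n}"
  unfolding vacant_dominoes_def by auto

lemma finite_vacant_dominoes: "finite (vacant_dominoes \<sigma>)"
  using vacant_dominoes_subset finite_subset by blast

lemma inj_on_domino_of: "\<sigma> \<in> hc_X K L \<Longrightarrow> inj_on (\<lambda>v. (fst v, snd v div 2)) \<sigma>"
proof (rule inj_onI)
  fix v w assume \<sigma>: "\<sigma> \<in> hc_X K L" and vw: "v \<in> \<sigma>" "w \<in> \<sigma>"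
    and eq: "(fst v, snd v div 2) = (fst w, snd w div 2)"
  obtain c r r' where v: "v = (c, r)" and w: "w = (c, r')" and rr: "r div 2 = r' div 2"
    using eq by (cases v, cases w) auto
  show "v = w"
  proof (rule ccontr)
    assume "v \<noteq> w"
    hence "r' = r + 1 \<or> r = r' + 1" using rr v w by simp presburger
    hence "cyl_adj K v w" unfolding cyl_adj_def v w by auto
    thus False using hc_X_not_adj[OF \<sigma> vw] by blast
  qed
qed

lemma domino_of_image:
  assumes "\<sigma> \<in> hc_X K L"
  shows "(\<lambda>v. (fst v, snd v div 2)) ` \<sigma> = ({0..<L} \<times> {0..<n}) - vacant_dominoes \<sigma>"
proof (rule set_eqI, rule iffI)
  fix x assume "x \<in> (\<lambda>v. (fst v, snd v div 2)) ` \<sigma>"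
  then obtain c r where cr: "(c, r) \<in> \<sigma>" "x = (c, r div 2)" by auto
  have "(c, r) \<in> sites K L" using assms cr unfolding hc_X_iff by blast
  hence "c < L" "r < K" unfolding sites_def by auto
  hence bounds: "c < L" "r div 2 < n" using even_K by (auto elim!: evenE)
  have "r = 2 * (r div 2) \<or> r = 2 * (r div 2) + 1" by presburger
  hence "\<not> vacant \<sigma> c (r div 2)" unfolding vacant_def using cr(1) by (elim disjE) (metis, metis)
  thus "x \<in> ({0..<L} \<times> {0..<n}) - vacant_dominoes \<sigma>"
    using cr bounds unfolding vacant_dominoes_def by simp
next
  fix x assume x: "x \<in> ({0..<L} \<times> {0..<n}) - vacant_dominoes \<sigma>"
  obtain c i where ci: "x = (c, i)" by (cases x)
  have "c < L" "i < n" using x ci by auto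
  hence "\<not> vacant \<sigma> c i" using x ci unfolding vacant_dominoes_def by simp
  hence "(c, 2 * i) \<in> \<sigma> \<or> (c, 2 * i + 1) \<in> \<sigma>" unfolding vacant_def by simp
  thus "x \<in> (\<lambda>v. (fst v, snd v div 2)) ` \<sigma>"
  proof
    assume "(c, 2 * i) \<in> \<sigma>"
    moreover have "x = (\<lambda>v. (fst v, snd v div 2)) (c, 2 * i)" using ci by simp
    ultimately show ?thesis by (rule rev_image_eqI)
  next
    assume "(c, 2 * i + 1) \<in> \<sigma>"
    moreover have "x = (\<lambda>v. (fst v, snd v div 2)) (c, 2 * i + 1)" using ci by simp
    ultimately show ?thesis by (rule rev_image_eqI)
  qed
qed

lemma card_plus_deficit: "\<sigma> \<in> hc_X K L \<Longrightarrow> card \<sigma> + deficit \<sigma> = L * n"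
proof -
  assume \<sigma>: "\<sigma> \<in> hc_X K L"
  have "card \<sigma> = card ((\<lambda>v. (fst v, snd v div 2)) ` \<sigma>)"
    using card_image[OF inj_on_domino_of[OF \<sigma>]] by simp
  also have "\<dots> = L * n - deficit \<sigma>"
    unfolding domino_of_image[OF \<sigma>] deficit_def using vacant_dominoes_subset
    by (simp add: card_Diff_subset finite_vacant_dominoes)
  finally show ?thesis
    using card_mono[OF _ vacant_dominoes_subset] unfolding deficit_def by simp
qed

lemma deficit_insert:
  "\<sigma> \<in> hc_X K L \<Longrightarrow> y \<notin> \<sigma> \<Longrightarrow> insert y \<sigma> \<in> hc_X K L \<Longrightarrow> deficit (insert y \<sigma>) + 1 = deficit \<sigma>"
  using card_plus_deficit[of \<sigma>] card_plus_deficit[of "insert y \<sigma>"] finite_conf[of \<sigma>] by simp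

lemma hc_H_eq_deficit: "\<sigma> \<in> hc_X K L \<Longrightarrow> hc_H \<sigma> = int (deficit \<sigma>) - int (L * n)"
proof -
  assume "\<sigma> \<in> hc_X K L"
  hence "int (card \<sigma>) + int (deficit \<sigma>) = int (L * n)" using card_plus_deficit by (metis of_nat_add)
  thus ?thesis unfolding hc_H_def by linarith
qed

end

context cylinder
begin

lemma cyl_adj_next_column:
  "Suc c < L \<Longrightarrow>
    cyl_adj K (even_site c i) (odd_site (Suc c) i) \<and> cyl_adj K (odd_site c i) (even_site (Suc c) i)"
proof -
  have "Suc c mod 2 = 1 - c mod 2" "c mod 2 \<le> 1" by presburger+
  thus ?thesis unfolding cyl_adj_def even_site_def odd_site_def by auto
qed

lemma full_row_monochromatic:
  assumes \<sigma>: "\<sigma> \<in> hc_X K L" and full: "\<forall>c<L. \<not> vacant \<sigma> c i"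
  shows "even_row \<sigma> i \<or> odd_row \<sigma> i"
proof -
  have occupied: "even_site c i \<in> \<sigma> \<or> odd_site c i \<in> \<sigma>" "odd_site c i \<in> \<sigma> \<or> even_site c i \<in> \<sigma>"
    if "c < L" for c
    using full that unfolding vacant_iff by blast+
  have even_step: "odd_site (Suc c) i \<notin> \<sigma>" if "Suc c < L" "even_site c i \<in> \<sigma>" for c
    using hc_X_not_adj[OF \<sigma> that(2)] cyl_adj_next_column[OF that(1)] by blast
  have odd_step: "even_site (Suc c) i \<notin> \<sigma>" if "Suc c < L" "odd_site c i \<in> \<sigma>" for c
    using hc_X_not_adj[OF \<sigma> that(2)] cyl_adj_next_column[OF that(1)] by blast
  show ?thesis
  proof (cases "even_site 0 i \<in> \<sigma>")
    case True
    thus ?thesis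
      using chain_propagate[where A = "\<lambda>c. even_site c i \<in> \<sigma>", OF occupied(1) even_step]
      unfolding even_row_def by blast
  next
    case False
    hence "odd_site 0 i \<in> \<sigma>" using occupied(1)[of 0] L_ge_2 by simp
    thus ?thesis
      using chain_propagate[where A = "\<lambda>c. odd_site c i \<in> \<sigma>", OF occupied(2) odd_step]
      unfolding odd_row_def by blast
  qed
qed

end

context cylinder
begin

lemma cyl_adj_next_domino: "cyl_adj K (c, 2 * i + 1) (c, 2 * Suc i)"
  unfolding cyl_adj_def by simp

lemma full_column_monochromatic:
  assumes \<sigma>: "\<sigma> \<in> hc_X K L" and full: "full_column \<sigma> c"
  shows "(\<forall>i<n. (c, 2 * i) \<in> \<sigma>) \<or> (\<forall>i<n. (c, 2 * i + 1) \<in> \<sigma>)"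
proof -
  have occupied: "(c, 2 * i) \<in> \<sigma> \<or> (c, 2 * i + 1) \<in> \<sigma>" if "i < n" for i
    using full that unfolding full_column_def vacant_def by blast
  show ?thesis
  proof (cases "(c, 0) \<in> \<sigma>")
    case True
    have "K - 1 = 2 * (n - 1) + 1" using K_eq n_pos by simp
    hence "cyl_adj K (c, 2 * (n - 1) + 1) (c, 0)" using cyl_adj_wrap[of c] by simp
    hence "(c, 2 * (n - 1) + 1) \<notin> \<sigma>" using hc_X_not_adj[OF \<sigma> _ True] by blast
    hence top: "(c, 2 * (n - 1 - 0)) \<in> \<sigma>" using occupied[of "n - 1"] n_pos by simp
    have down: "(c, 2 * (n - 1 - j)) \<in> \<sigma> \<or> (c, 2 * (n - 1 - j) + 1) \<in> \<sigma>" if "j < n" for j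
      using occupied[of "n - 1 - j"] that by simp
    have step: "(c, 2 * (n - 1 - Suc j) + 1) \<notin> \<sigma>"
      if "Suc j < n" "(c, 2 * (n - 1 - j)) \<in> \<sigma>" for j
    proof -
      have "n - 1 - j = Suc (n - 1 - Suc j)" using that(1) by simp
      hence "cyl_adj K (c, 2 * (n - 1 - Suc j) + 1) (c, 2 * (n - 1 - j))"
        using cyl_adj_next_domino[of c "n - 1 - Suc j"] by simp
      thus ?thesis using hc_X_not_adj[OF \<sigma> _ that(2)] by blast
    qed
    have "(c, 2 * i) \<in> \<sigma>" if "i < n" for i
    proof -
      have "n - 1 - i < n" "n - 1 - (n - 1 - i) = i" using that by auto
      moreover have "j < n \<Longrightarrow> (c, 2 * (n - 1 - j)) \<in> \<sigma>" for j
        using chain_propagate[of n "\<lambda>j. (c, 2 * (n - 1 - j)) \<in> \<sigma>", OF down step top] by simp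
      ultimately show ?thesis by (metis (no_types))

    qed
    thus ?thesis by blast
  next
    case False
    hence start: "(c, 2 * 0 + 1) \<in> \<sigma>" using occupied[of 0] n_pos by simp
    have up: "(c, 2 * i + 1) \<in> \<sigma> \<or> (c, 2 * i) \<in> \<sigma>" if "i < n" for i
      using occupied[OF that] by blast
    have step: "(c, 2 * Suc i) \<notin> \<sigma>" if "Suc i < n" "(c, 2 * i + 1) \<in> \<sigma>" for i
      using hc_X_not_adj[OF \<sigma> that(2)] cyl_adj_next_domino by blast
    have "(c, 2 * i + 1) \<in> \<sigma>" if "i < n" for i
      using chain_propagate[of n "\<lambda>i. (c, 2 * i + 1) \<in> \<sigma>", OF up step start that] .
    thus ?thesis by blast
  qed
qed

lemma full_column_not_even_and_odd:
  assumes \<sigma>: "\<sigma> \<in> hc_X K L" and full: "full_column \<sigma> c" and "i < n" "j < n"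
    and even: "even_site c i \<in> \<sigma>" and odd: "odd_site c j \<in> \<sigma>"
  shows False
proof -
  have domino: "(c, 2 * k) \<notin> \<sigma> \<or> (c, 2 * k + 1) \<notin> \<sigma>" for k
  proof -
    have "cyl_adj K (c, 2 * k) (c, 2 * k + 1)" unfolding cyl_adj_def by simp
    thus ?thesis using hc_X_not_adj[OF \<sigma>] by blast
  qed
  consider "even_site c i = (c, 2 * i)" "odd_site c j = (c, 2 * j + 1)"
    | "even_site c i = (c, 2 * i + 1)" "odd_site c j = (c, 2 * j)"
    unfolding even_site_def odd_site_def by (cases "c mod 2 = 0") (simp_all add: not_mod_2_eq_0_eq_1)
  thus False
  proof cases
    case 1
    thus False using full_column_monochromatic[OF \<sigma> full] domino[of i] domino[of j] even odd
        \<open>i < n\<close> \<open>j < n\<close> by auto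
  next
    case 2
    thus False using full_column_monochromatic[OF \<sigma> full] domino[of i] domino[of j] even odd
        \<open>i < n\<close> \<open>j < n\<close> by auto
  qed
qed

lemma exists_full_row: "deficit \<sigma> < n \<Longrightarrow> \<exists>i<n. \<forall>c<L. \<not> vacant \<sigma> c i"
proof (rule ccontr)
  assume "deficit \<sigma> < n" "\<not> (\<exists>i<n. \<forall>c<L. \<not> vacant \<sigma> c i)"
  hence "{0..<n} \<subseteq> snd ` vacant_dominoes \<sigma>"
    unfolding vacant_dominoes_def by (force simp: image_iff)
  hence "n \<le> card (snd ` vacant_dominoes \<sigma>)"
    using card_mono[OF finite_imageI[OF finite_vacant_dominoes]] by fastforce
  also have "\<dots> \<le> deficit \<sigma>" unfolding deficit_def by (rule card_image_le[OF finite_vacant_dominoes])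
  finally show False using \<open>deficit \<sigma> < n\<close> by simp
qed

lemma every_column_vacant_card:
  "\<forall>c<L. \<not> full_column \<sigma> c \<Longrightarrow> L \<le> card (fst ` vacant_dominoes \<sigma>)"
proof -
  assume "\<forall>c<L. \<not> full_column \<sigma> c"
  hence "{0..<L} \<subseteq> fst ` vacant_dominoes \<sigma>"
    unfolding vacant_dominoes_def full_column_def by (force simp: image_iff)
  thus ?thesis using card_mono[OF finite_imageI[OF finite_vacant_dominoes]] by fastforce
qed

lemma exists_full_column: "deficit \<sigma> < L \<Longrightarrow> \<exists>c<L. full_column \<sigma> c"
  using every_column_vacant_card card_image_le[OF finite_vacant_dominoes, of fst \<sigma>]
  unfolding deficit_def by fastforce

lemma vacant_unique_in_column:
  assumes "\<forall>c<L. \<not> full_column \<sigma> c" "deficit \<sigma> \<le> L" "c < L" "i < n" "j < n"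
    and "vacant \<sigma> c i" "vacant \<sigma> c j"
  shows "i = j"
proof -
  have "L \<le> card (fst ` vacant_dominoes \<sigma>)" using every_column_vacant_card[OF assms(1)] .
  hence "card (fst ` vacant_dominoes \<sigma>) = card (vacant_dominoes \<sigma>)"
    using assms(2) card_image_le[OF finite_vacant_dominoes, of fst \<sigma>] unfolding deficit_def by simp
  hence "inj_on fst (vacant_dominoes \<sigma>)" using inj_on_iff_eq_card[OF finite_vacant_dominoes] by blast
  moreover have "(c, i) \<in> vacant_dominoes \<sigma>" "(c, j) \<in> vacant_dominoes \<sigma>"
    using assms unfolding vacant_dominoes_def by simp_all
  ultimately show ?thesis using inj_onD[of fst _ "(c, i)" "(c, j)"] by simp
qed

end

context cylinder
begin

subsection \<open>Lower bound on the communication height\<close>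

definition parity_class :: "nat \<Rightarrow> (nat \<times> nat) set" where
  "parity_class P = {v \<in> sites K L. parity v = P}"

lemma even_conf_eq: "even_conf K L = parity_class 0"
  unfolding parity_class_def even_conf_def parity_def by presburger

lemma odd_conf_eq: "odd_conf K L = parity_class 1"
  unfolding parity_class_def odd_conf_def parity_def by presburger

lemma parity_class_in_hc_X: "parity_class P \<in> hc_X K L"
  unfolding hc_X_iff parity_class_def using parity_cyl_adj by fastforce

lemma even_site_in_parity_class: "c < L \<Longrightarrow> i < n \<Longrightarrow> even_site c i \<in> parity_class 0"
  using domino_sites_in_sites parity_even_site unfolding parity_class_def by simp

lemma odd_site_in_parity_class: "c < L \<Longrightarrow> i < n \<Longrightarrow> odd_site c i \<in> parity_class 1"
  using domino_sites_in_sites parity_odd_site unfolding parity_class_def by simp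

lemma deficit_parity_class: "P \<le> 1 \<Longrightarrow> deficit (parity_class P) = 0"
proof -
  assume "P \<le> 1"
  hence "P = 0 \<or> P = 1" by auto
  hence "vacant_dominoes (parity_class P) = {}"
    using even_site_in_parity_class odd_site_in_parity_class
    unfolding vacant_dominoes_def vacant_iff by auto
  thus ?thesis unfolding deficit_def by simp
qed

lemma hc_H_ge_even_conf: "\<sigma> \<in> hc_X K L \<Longrightarrow> hc_H (even_conf K L) \<le> hc_H \<sigma>"
  using hc_H_eq_deficit[of \<sigma>] hc_H_eq_deficit[OF parity_class_in_hc_X, of 0]
    deficit_parity_class[of 0] even_conf_eq by simp

lemma even_row_mono: "even_row \<sigma> i \<Longrightarrow> \<sigma> \<subseteq> \<tau> \<Longrightarrow> even_row \<tau> i"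
  unfolding even_row_def by blast

lemma odd_row_mono: "odd_row \<sigma> i \<Longrightarrow> \<sigma> \<subseteq> \<tau> \<Longrightarrow> odd_row \<tau> i"
  unfolding odd_row_def by blast

lemma exists_monochromatic_row:
  "\<sigma> \<in> hc_X K L \<Longrightarrow> deficit \<sigma> < barrier \<Longrightarrow> \<exists>j<n. even_row \<sigma> j \<or> odd_row \<sigma> j"
  using exists_full_row full_row_monochromatic by (metis min_less_iff_conj)

lemma not_even_row_and_odd_row:
  assumes \<sigma>: "\<sigma> \<in> hc_X K L" and "deficit \<sigma> < barrier" "i < n" "j < n"
    and "even_row \<sigma> i" "odd_row \<sigma> j"
  shows False
proof -
  obtain c where "c < L" "full_column \<sigma> c" using exists_full_column assms(2) by auto
  thus False using full_column_not_even_and_odd[OF \<sigma> _ assms(3,4)] assms(5,6)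
    unfolding even_row_def odd_row_def by blast
qed

lemma even_row_insertD:
  assumes "insert x \<sigma> \<in> hc_X K L" "even_row (insert x \<sigma>) i" "\<not> even_row \<sigma> i"
  obtains c where "c < L" "x = even_site c i" "vacant \<sigma> c i"
    "\<And>c'. c' < L \<Longrightarrow> c' \<noteq> c \<Longrightarrow> even_site c' i \<in> \<sigma>"
proof -
  obtain c where c: "c < L" "even_site c i \<notin> \<sigma>" using assms(3) unfolding even_row_def by blast
  hence x: "x = even_site c i" using assms(2) unfolding even_row_def by blast
  have "odd_site c i \<notin> \<sigma>"
    using hc_X_not_adj[OF assms(1)] cyl_adj_domino[of c i] x by blast
  hence "vacant \<sigma> c i" using c(2) vacant_iff by blast
  moreover have "even_site c' i \<in> \<sigma>" if "c' < L" "c' \<noteq> c" for c'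
    using assms(2) that x fst_even_site unfolding even_row_def by (metis insertE)
  ultimately show thesis using that c(1) x by blast
qed

lemma odd_row_insertD:
  assumes "insert y \<sigma> \<in> hc_X K L" "odd_row (insert y \<sigma>) j" "\<not> odd_row \<sigma> j"
  obtains c where "c < L" "y = odd_site c j" "vacant \<sigma> c j"
    "\<And>c'. c' < L \<Longrightarrow> c' \<noteq> c \<Longrightarrow> odd_site c' j \<in> \<sigma>"
proof -
  obtain c where c: "c < L" "odd_site c j \<notin> \<sigma>" using assms(3) unfolding odd_row_def by blast
  hence y: "y = odd_site c j" using assms(2) unfolding odd_row_def by blast
  have "even_site c j \<notin> \<sigma>"
    using hc_X_not_adj[OF assms(1)] cyl_adj_domino[of c j] y by blast
  hence "vacant \<sigma> c j" using c(2) vacant_iff by blast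
  moreover have "odd_site c' j \<in> \<sigma>" if "c' < L" "c' \<noteq> c" for c'
    using assms(2) that y fst_odd_site unfolding odd_row_def by (metis insertE)
  ultimately show thesis using that c(1) y by blast
qed

end

context cylinder
begin

lemma almost_even_and_almost_odd_rows:
  assumes \<sigma>: "\<sigma> \<in> hc_X K L" and "deficit \<sigma> \<le> L" and ij: "i < n" "j < n"
    and cx: "cx < L" "vacant \<sigma> cx i" "\<And>c. c < L \<Longrightarrow> c \<noteq> cx \<Longrightarrow> even_site c i \<in> \<sigma>"
    and cy: "cy < L" "vacant \<sigma> cy j" "\<And>c. c < L \<Longrightarrow> c \<noteq> cy \<Longrightarrow> odd_site c j \<in> \<sigma>"
    and y: "insert (odd_site cy j) \<sigma> \<in> hc_X K L"
  shows False
proof (cases "i = j")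
  case True
  have "cx = cy" using cx(1,2) cy(3) True vacant_iff by blast
  define c where "c = (if cx = 0 then 1 else (0::nat))"
  have c: "c < L" "c \<noteq> cx" unfolding c_def using L_ge_2 by auto
  hence "even_site c i \<in> \<sigma>" "odd_site c i \<in> \<sigma>" using cx(3) cy(3) \<open>cx = cy\<close> True by auto
  thus False using hc_X_not_adj[OF \<sigma>] cyl_adj_domino by blast
next
  case False
  show False
  proof (cases "\<exists>c<L. full_column \<sigma> c")
    case True
    then obtain c where c: "c < L" "full_column \<sigma> c" by blast
    hence "c \<noteq> cx" "c \<noteq> cy" using cx(2) cy(2) ij unfolding full_column_def by auto
    thus False using full_column_not_even_and_odd[OF \<sigma> c(2) ij] cx(3) cy(3) c(1) by blast
  next
    case no_full: False
    have unique: "k = j" if "k < n" "vacant \<sigma> cy k" for k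
      using vacant_unique_in_column[OF _ assms(2) cy(1) that(1) ij(2) that(2) cy(2)] no_full by blast
    hence "cx \<noteq> cy" using cx(2) ij(1) False by blast
    have "full_column (insert (odd_site cy j) \<sigma>) cy"
      unfolding full_column_def
    proof (intro allI impI)
      fix k assume "k < n"
      show "\<not> vacant (insert (odd_site cy j) \<sigma>) cy k"
      proof (cases "k = j")
        case True thus ?thesis using vacant_iff by blast
      next
        case False
        thus ?thesis using unique[OF \<open>k < n\<close>] vacant_mono[of "insert (odd_site cy j) \<sigma>" cy k \<sigma>] by blast
      qed
    qed
    moreover have "even_site cy i \<in> insert (odd_site cy j) \<sigma>" using cx(3)[OF cy(1)] \<open>cx \<noteq> cy\<close> by blast
    ultimately show False using full_column_not_even_and_odd[OF y _ ij] by blast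
  qed
qed

lemma single_insertions_keep_even_row:
  assumes \<sigma>: "\<sigma> \<in> hc_X K L" and at_barrier: "deficit \<sigma> = barrier"
    and x: "x \<notin> \<sigma>" "insert x \<sigma> \<in> hc_X K L" and y: "y \<notin> \<sigma>" "insert y \<sigma> \<in> hc_X K L"
    and i: "i < n" "even_row (insert x \<sigma>) i"
  shows "\<exists>j<n. even_row (insert y \<sigma>) j"
proof (rule ccontr)
  assume no_even: "\<not> ?thesis"
  have "barrier \<ge> 1" using n_pos L_ge_2 by simp
  hence below: "deficit (insert x \<sigma>) < barrier" "deficit (insert y \<sigma>) < barrier"
    using deficit_insert[OF \<sigma> x] deficit_insert[OF \<sigma> y] at_barrier by linarith+
  then obtain j where j: "j < n" "odd_row (insert y \<sigma>) j"
    using exists_monochromatic_row[OF y(2)] no_even by blast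
  have "\<not> even_row \<sigma> i" using even_row_mono[of \<sigma> i "insert y \<sigma>"] no_even i(1) by blast
  then obtain cx where cx: "cx < L" "vacant \<sigma> cx i" "\<And>c. c < L \<Longrightarrow> c \<noteq> cx \<Longrightarrow> even_site c i \<in> \<sigma>"
    using even_row_insertD[OF x(2) i(2)] by metis
  have "\<not> odd_row \<sigma> j"
    using odd_row_mono[of \<sigma> j "insert x \<sigma>"] not_even_row_and_odd_row[OF x(2) below(1) i(1) j(1) i(2)]
    by blast
  then obtain cy where "y = odd_site cy j" "cy < L" "vacant \<sigma> cy j"
      "\<And>c. c < L \<Longrightarrow> c \<noteq> cy \<Longrightarrow> odd_site c j \<in> \<sigma>"
    using odd_row_insertD[OF y(2) j(2)] by metis
  moreover have "deficit \<sigma> \<le> L" using at_barrier by simp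
  ultimately show False using almost_even_and_almost_odd_rows[OF \<sigma> _ i(1) j(1) cx] y(2) by blast
qed

text \<open>The invariant carried along paths from the even configuration that stay within the
  barrier; the odd configuration violates it.\<close>

definition keeps_even_row :: "(nat \<times> nat) set \<Rightarrow> bool" where
  "keeps_even_row \<sigma> \<longleftrightarrow> (deficit \<sigma> < barrier \<longrightarrow> (\<exists>i<n. even_row \<sigma> i)) \<and>
     (deficit \<sigma> = barrier \<longrightarrow>
       (\<forall>y. y \<notin> \<sigma> \<longrightarrow> insert y \<sigma> \<in> hc_X K L \<longrightarrow> (\<exists>i<n. even_row (insert y \<sigma>) i)))"

lemma keeps_even_row_insert:
  assumes \<sigma>: "\<sigma> \<in> hc_X K L" and y: "y \<notin> \<sigma>" "insert y \<sigma> \<in> hc_X K L"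
    and "deficit \<sigma> \<le> barrier" "keeps_even_row \<sigma>"
  shows "keeps_even_row (insert y \<sigma>)"
proof -
  have less: "deficit (insert y \<sigma>) < deficit \<sigma>" using deficit_insert[OF \<sigma> y] by simp
  have "\<exists>i<n. even_row (insert y \<sigma>) i"
  proof (cases "deficit \<sigma> = barrier")
    case True thus ?thesis using assms unfolding keeps_even_row_def by blast
  next
    case False
    then obtain i where "i < n" "even_row \<sigma> i" using assms(4,5) unfolding keeps_even_row_def by auto
    thus ?thesis using even_row_mono[of \<sigma> i "insert y \<sigma>"] by blast
  qed
  moreover have "deficit (insert y \<sigma>) \<noteq> barrier" using less assms(4) by linarith
  ultimately show ?thesis unfolding keeps_even_row_def by blast
qed

lemma keeps_even_row_remove:
  assumes \<sigma>: "\<sigma> \<in> hc_X K L" and x: "x \<notin> \<sigma>" "insert x \<sigma> \<in> hc_X K L"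
    and "deficit \<sigma> \<le> barrier" "keeps_even_row (insert x \<sigma>)"
  shows "keeps_even_row \<sigma>"
proof -
  have below: "deficit (insert x \<sigma>) < barrier" using deficit_insert[OF \<sigma> x] assms(4) by simp
  then obtain i where i: "i < n" "even_row (insert x \<sigma>) i"
    using assms(5) unfolding keeps_even_row_def by blast
  have "\<exists>i<n. even_row \<sigma> i" if strictly_below: "deficit \<sigma> < barrier"
  proof -
    obtain j where j: "j < n" "even_row \<sigma> j \<or> odd_row \<sigma> j"
      using exists_monochromatic_row[OF \<sigma> strictly_below] by blast
    have "\<not> odd_row \<sigma> j"
      using odd_row_mono[of \<sigma> j "insert x \<sigma>"] not_even_row_and_odd_row[OF x(2) below i(1) j(1) i(2)]
      by blast
    thus ?thesis using j by blast
  qed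
  moreover have "\<exists>i<n. even_row (insert y \<sigma>) i"
    if "deficit \<sigma> = barrier" "y \<notin> \<sigma>" "insert y \<sigma> \<in> hc_X K L" for y
    using single_insertions_keep_even_row[OF \<sigma> that(1) x that(2,3) i] .
  ultimately show ?thesis unfolding keeps_even_row_def by blast
qed

end

context cylinder
begin

lemma keeps_even_row_even_conf: "keeps_even_row (even_conf K L)"
proof -
  have "even_row (even_conf K L) 0"
    using even_site_in_parity_class n_pos unfolding even_row_def even_conf_eq by simp
  moreover have "0 < n" "0 < barrier" using n_pos L_ge_2 by auto
  ultimately show ?thesis
    using deficit_parity_class[of 0] unfolding keeps_even_row_def even_conf_eq by auto
qed

lemma keeps_even_row_along_path:
  "is_path (hc_X K L) (hc_q K L) p \<Longrightarrow> hd p = even_conf K L \<Longrightarrow> \<forall>s\<in>set p. deficit s \<le> barrier \<Longrightarrow>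
   keeps_even_row (last p)"
proof (induction p rule: rev_induct)
  case Nil thus ?case by (simp add: is_path_def)
next
  case (snoc x xs)
  show ?case
  proof (cases "xs = []")
    case True thus ?thesis using snoc keeps_even_row_even_conf by simp
  next
    case False
    have xs: "is_path (hc_X K L) (hc_q K L) xs \<and> hc_q K L (last xs) x > 0 \<and> x \<in> hc_X K L"
      using is_path_snocD[OF snoc(2) False] .
    have IH: "keeps_even_row (last xs)" using snoc xs False by simp
    have last_xs: "last xs \<in> hc_X K L" using xs False unfolding is_path_def by auto
    have "deficit x \<le> barrier" "deficit (last xs) \<le> barrier" using snoc(4) False by simp_all
    show ?thesis
    proof (cases "last xs = x")
      case True thus ?thesis using IH by simp
    next
      case False
      hence "ndiff (last xs) x = 1" using hc_q_posD xs by blast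
      then consider v where "v \<notin> last xs" "x = insert v (last xs)"
        | v where "v \<notin> x" "last xs = insert v x"
        using ndiff_eq_1D by blast
      thus ?thesis
      proof cases
        case 1 thus ?thesis
          using keeps_even_row_insert[OF last_xs] xs IH \<open>deficit (last xs) \<le> barrier\<close> by simp
      next
        case 2 thus ?thesis
          using keeps_even_row_remove[of x] xs last_xs IH \<open>deficit x \<le> barrier\<close> by simp
      qed
    qed
  qed
qed

lemma path_even_to_odd_crosses_barrier:
  assumes "is_path (hc_X K L) (hc_q K L) p" "hd p = even_conf K L" "last p = odd_conf K L"
  shows "\<exists>s\<in>set p. barrier + 1 \<le> deficit s"
proof (rule ccontr)
  assume "\<not> ?thesis"
  hence "\<forall>s\<in>set p. deficit s \<le> barrier" by auto
  hence "keeps_even_row (odd_conf K L)" using keeps_even_row_along_path[OF assms(1,2)] assms(3) by simp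
  then obtain i where "i < n" "even_row (parity_class 1) i"
    using deficit_parity_class[of 1] n_pos L_ge_2 unfolding keeps_even_row_def odd_conf_eq by auto
  hence "even_site 0 i \<in> parity_class 1" using L_ge_2 unfolding even_row_def by simp
  thus False using parity_even_site unfolding parity_class_def by simp
qed

lemma Phi_even_odd_ge:
  "hc_H (even_conf K L) + int barrier + 1 \<le> Phi (hc_X K L) hc_H (hc_q K L) (even_conf K L) (odd_conf K L)"
proof (rule Phi_ge_if_paths_cross)
  show "even_conf K L \<in> hc_X K L" "odd_conf K L \<in> hc_X K L"
    unfolding even_conf_eq odd_conf_eq by (rule parity_class_in_hc_X)+
  fix p assume p: "is_path (hc_X K L) (hc_q K L) p" "hd p = even_conf K L" "last p = odd_conf K L"
  obtain s where s: "s \<in> set p" "barrier + 1 \<le> deficit s"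
    using path_even_to_odd_crosses_barrier[OF p] by blast
  have "s \<in> hc_X K L" using s(1) p(1) unfolding is_path_def by auto
  thus "\<exists>s\<in>set p. hc_H (even_conf K L) + int barrier + 1 \<le> hc_H s"
    using s hc_H_eq_deficit parity_class_in_hc_X[of 0] deficit_parity_class[of 0]
    unfolding even_conf_eq by force
qed

end

context cylinder
begin

subsection \<open>Upper bound: sweeping to a checkerboard\<close>

definition nbrs :: "(nat \<times> nat) set \<Rightarrow> (nat \<times> nat) set" where
  "nbrs V = {w \<in> sites K L. \<exists>v\<in>V. cyl_adj K v w}"

definition impose :: "(nat \<times> nat) set \<Rightarrow> (nat \<times> nat) set \<Rightarrow> (nat \<times> nat) set" where
  "impose \<sigma> V = (\<sigma> - nbrs V) \<union> V"

lemma nbrs_parity: "P \<le> 1 \<Longrightarrow> V \<subseteq> parity_class P \<Longrightarrow> w \<in> nbrs V \<Longrightarrow> w \<in> parity_class (1 - P)"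
proof -
  assume P: "P \<le> 1" and V: "V \<subseteq> parity_class P" and w: "w \<in> nbrs V"
  then obtain v where v: "v \<in> V" "cyl_adj K v w" "w \<in> sites K L" unfolding nbrs_def by blast
  have "parity v = P" using v V unfolding parity_class_def by blast
  hence "parity w = 1 - P"
    using parity_cyl_adj_other[OF P, of v w] parity_cyl_adj[OF v(2)] parity_le_1[of w] P by linarith
  thus ?thesis using v(3) unfolding parity_class_def by simp
qed

lemma parity_class_disjoint: "P \<le> 1 \<Longrightarrow> parity_class P \<inter> parity_class (1 - P) = {}"
proof -
  assume "P \<le> 1"
  hence "P \<noteq> 1 - P" by arith
  thus ?thesis unfolding parity_class_def by auto
qed

lemma parity_class_not_adj: "v \<in> parity_class P \<Longrightarrow> w \<in> parity_class P \<Longrightarrow> \<not> cyl_adj K v w"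
  using parity_cyl_adj[of v w] unfolding parity_class_def by auto

lemma impose_in_hc_X: "\<sigma> \<in> hc_X K L \<Longrightarrow> V \<subseteq> parity_class P \<Longrightarrow> impose \<sigma> V \<in> hc_X K L"
  unfolding hc_X_iff
proof (intro conjI ballI notI)
  assume s: "\<sigma> \<subseteq> sites K L \<and> (\<forall>v\<in>\<sigma>. \<forall>w\<in>\<sigma>. \<not> cyl_adj K v w)" and V: "V \<subseteq> parity_class P"
  show "impose \<sigma> V \<subseteq> sites K L" using s V unfolding impose_def parity_class_def by blast
  fix a b assume ab: "a \<in> impose \<sigma> V" "b \<in> impose \<sigma> V" "cyl_adj K a b"
  show False
  proof (cases "a \<in> V")
    case aV: True
    show False
    proof (cases "b \<in> V")
      case True thus False using parity_class_not_adj aV V ab(3) by blast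
    next
      case False
      hence "b \<in> \<sigma>" "b \<notin> nbrs V" using ab(2) unfolding impose_def by auto
      moreover have "b \<in> sites K L" using s \<open>b \<in> \<sigma>\<close> by blast
      ultimately show False using aV ab(3) unfolding nbrs_def by blast
    qed
  next
    case aV: False
    hence a: "a \<in> \<sigma>" "a \<notin> nbrs V" using ab(1) unfolding impose_def by auto
    show False
    proof (cases "b \<in> V")
      case True
      have "a \<in> sites K L" using s a by blast
      moreover have "cyl_adj K b a" using ab(3) cyl_adj_sym by blast
      ultimately show False using a True unfolding nbrs_def by blast
    next
      case False
      hence "b \<in> \<sigma>" using ab(2) unfolding impose_def by auto
      thus False using s a ab(3) by blast
    qed
  qed
qed

lemma finite_parity_class: "finite (parity_class P)"
proof -
  have "parity_class P \<subseteq> sites K L" unfolding parity_class_def by blast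
  thus ?thesis using finite_subset finite_sites by blast
qed

lemma card_charged_le:
  assumes \<sigma>: "\<sigma> \<in> hc_X K L" and P: "P \<le> 1" and V: "V \<subseteq> parity_class P"
    and \<phi>: "\<And>w. w \<in> parity_class (1 - P) - E \<Longrightarrow> \<phi> w \<in> parity_class P \<and> cyl_adj K w (\<phi> w)"
    and inj: "inj_on \<phi> (parity_class (1 - P) - E)"
    and closed: "\<And>w. w \<in> nbrs V \<Longrightarrow> w \<in> parity_class (1 - P) - E \<Longrightarrow> \<phi> w \<in> V"
  shows "card (\<sigma> \<inter> nbrs V - E) + card (\<sigma> \<inter> V) \<le> card V"
proof -
  let ?W = "\<sigma> \<inter> nbrs V - E"
  have W: "?W \<subseteq> parity_class (1 - P) - E" using nbrs_parity[OF P V] by blast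
  have fin_V: "finite V" using finite_subset[OF V finite_parity_class] .
  have "\<phi> ` ?W \<inter> (\<sigma> \<inter> V) = {}"
  proof (rule ccontr)
    assume "\<phi> ` ?W \<inter> (\<sigma> \<inter> V) \<noteq> {}"
    then obtain w where "w \<in> ?W" "\<phi> w \<in> \<sigma>" by blast
    thus False using \<phi> W hc_X_not_adj[OF \<sigma>] by blast
  qed
  moreover have img: "\<phi> ` ?W \<subseteq> V" using closed W by blast
  ultimately have "card (\<phi> ` ?W) + card (\<sigma> \<inter> V) = card (\<phi> ` ?W \<union> (\<sigma> \<inter> V))"
    using fin_V finite_subset[OF img fin_V] by (intro card_Un_disjoint[symmetric]) auto
  also have "\<dots> \<le> card V" using img fin_V by (intro card_mono) auto
  finally show ?thesis using card_image[OF inj_on_subset[OF inj W]] by simp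
qed

lemma card_le_impose:
  assumes \<sigma>: "\<sigma> \<in> hc_X K L" and P: "P \<le> 1" and V: "V \<subseteq> parity_class P"
    and \<phi>: "\<And>w. w \<in> parity_class (1 - P) - E \<Longrightarrow> \<phi> w \<in> parity_class P \<and> cyl_adj K w (\<phi> w)"
    and inj: "inj_on \<phi> (parity_class (1 - P) - E)"
    and closed: "\<And>w. w \<in> nbrs V \<Longrightarrow> w \<in> parity_class (1 - P) - E \<Longrightarrow> \<phi> w \<in> V"
  shows "card \<sigma> \<le> card (impose \<sigma> V) + card (\<sigma> \<inter> E)"
proof -
  let ?R = "\<sigma> - (nbrs V \<union> V)"
  have fin: "finite \<sigma>" "finite V" using finite_conf[OF \<sigma>] finite_subset[OF V finite_parity_class] by auto
  have "nbrs V \<subseteq> parity_class (1 - P)" using nbrs_parity[OF P V] by blast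
  hence disj: "nbrs V \<inter> V = {}" using V parity_class_disjoint[OF P] by blast
  have "card (?R \<union> (\<sigma> \<inter> V \<union> \<sigma> \<inter> nbrs V)) = card ?R + card (\<sigma> \<inter> V \<union> \<sigma> \<inter> nbrs V)"
    using fin by (intro card_Un_disjoint) auto
  moreover have "card (\<sigma> \<inter> V \<union> \<sigma> \<inter> nbrs V) = card (\<sigma> \<inter> V) + card (\<sigma> \<inter> nbrs V)"
    using fin disj by (intro card_Un_disjoint) auto
  moreover have "?R \<union> (\<sigma> \<inter> V \<union> \<sigma> \<inter> nbrs V) = \<sigma>" by blast
  ultimately have "card \<sigma> = card ?R + card (\<sigma> \<inter> V) + card (\<sigma> \<inter> nbrs V)" by simp
  moreover have "card (impose \<sigma> V) = card ?R + card V"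
  proof -
    have "impose \<sigma> V = ?R \<union> V" unfolding impose_def by blast
    moreover have "card (?R \<union> V) = card ?R + card V" using fin by (intro card_Un_disjoint) auto
    ultimately show ?thesis by simp
  qed
  moreover have "card (\<sigma> \<inter> nbrs V) \<le> card (\<sigma> \<inter> nbrs V - E) + card (\<sigma> \<inter> E)"
  proof -
    have "card (\<sigma> \<inter> nbrs V) \<le> card ((\<sigma> \<inter> nbrs V - E) \<union> (\<sigma> \<inter> E))"
      using fin by (intro card_mono) auto
    also have "\<dots> \<le> card (\<sigma> \<inter> nbrs V - E) + card (\<sigma> \<inter> E)" by (rule card_Un_le)
    finally show ?thesis .
  qed
  ultimately show ?thesis using card_charged_le[OF assms] by linarith
qed

lemma impose_empty: "impose \<sigma> {} = \<sigma>" unfolding impose_def nbrs_def by simp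

lemma nbrs_insert: "nbrs (insert v V) = nbrs {v} \<union> nbrs V" unfolding nbrs_def by blast

lemma impose_insert:
  assumes P: "P \<le> 1" and V: "V \<subseteq> parity_class P" and v: "v \<in> parity_class P"
  shows "impose \<sigma> (insert v V) = insert v (impose \<sigma> V - nbrs {v})"
proof -
  have "nbrs {v} \<subseteq> parity_class (1 - P)" using nbrs_parity[OF P, of "{v}"] v by blast
  hence "V \<inter> nbrs {v} = {}" "v \<notin> nbrs {v}" using V v parity_class_disjoint[OF P] by blast+
  thus ?thesis unfolding impose_def nbrs_insert[of v V] by blast
qed

lemma reach_impose_insert:
  assumes \<sigma>: "\<sigma> \<in> hc_X K L" and P: "P \<le> 1" and V: "V \<subseteq> parity_class P" and v: "v \<in> parity_class P"
    and bound: "card \<sigma> \<le> card (impose \<sigma> (insert v V)) + d"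
  shows "reach (hc_H \<sigma> + int d + 1) (impose \<sigma> V) (impose \<sigma> (insert v V))"
proof -
  define \<tau> where "\<tau> = impose \<sigma> V"
  define R where "R = \<tau> \<inter> nbrs {v}"
  have \<tau>: "\<tau> \<in> hc_X K L" unfolding \<tau>_def by (rule impose_in_hc_X[OF \<sigma> V])
  have R: "R \<subseteq> \<tau>" "finite R" using finite_conf[OF \<tau>] unfolding R_def by auto
  have next_conf: "impose \<sigma> (insert v V) = insert v (\<tau> - R)"
    unfolding \<tau>_def R_def using impose_insert[OF P V v] by blast
  have "insert v V \<subseteq> parity_class P" using V v by blast
  hence next_in: "insert v (\<tau> - R) \<in> hc_X K L" using impose_in_hc_X[OF \<sigma>] next_conf by metis
  have "card (\<tau> - R) = card \<tau> - card R" "card R \<le> card \<tau>"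
    using card_Diff_subset[OF R(2,1)] card_mono[OF finite_conf[OF \<tau>] R(1)] by auto
  moreover have "card (insert v (\<tau> - R)) \<le> card (\<tau> - R) + 1"
    using finite_conf[OF \<tau>] by (simp add: card_insert_if)
  moreover have bound': "card \<sigma> \<le> card (insert v (\<tau> - R)) + d" using bound next_conf by simp
  ultimately have "hc_H \<tau> + int (card R) \<le> hc_H \<sigma> + int d + 1"
    unfolding hc_H_def by linarith
  hence removed: "reach (hc_H \<sigma> + int d + 1) \<tau> (\<tau> - R)"
    using reach_le_mono[OF reach_remove[OF \<tau> R(2,1)]] by blast
  show ?thesis
  proof (cases "v \<in> \<tau> - R")
    case True
    hence "insert v (\<tau> - R) = \<tau> - R" by blast
    thus ?thesis using removed next_conf unfolding \<tau>_def by simp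
  next
    case False
    have "hc_q K L (\<tau> - R) (insert v (\<tau> - R)) > 0" using hc_q_pos ndiff_insert[OF False] by blast
    moreover have "hc_H (insert v (\<tau> - R)) \<le> hc_H \<sigma> + int d + 1"
      using bound' unfolding hc_H_def by linarith
    ultimately show ?thesis using reach_le_step[OF removed next_in] next_conf unfolding \<tau>_def by simp
  qed
qed

lemma exists_cyl_adj: "w \<in> sites K L \<Longrightarrow> \<exists>u\<in>sites K L. cyl_adj K u w"
proof -
  assume w: "w \<in> sites K L"
  obtain c r where cr: "w = (c, r)" by (cases w)
  have b: "c < L" "r < K" using w cr unfolding sites_def by auto
  show ?thesis
  proof (cases "Suc r < K")
    case True
    have "cyl_adj K (c, Suc r) w" unfolding cyl_adj_def cr by simp
    moreover have "(c, Suc r) \<in> sites K L" using b True unfolding sites_def by simp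
    ultimately show ?thesis by blast
  next
    case False
    hence "r = K - 1" using b by simp
    hence "cyl_adj K (c, 0) w" using cyl_adj_wrap[of c] cyl_adj_sym cr by simp
    moreover have "(c, 0) \<in> sites K L" using b K_ge_2 unfolding sites_def by simp
    ultimately show ?thesis by blast
  qed
qed

lemma impose_parity_class: "\<sigma> \<in> hc_X K L \<Longrightarrow> P \<le> 1 \<Longrightarrow> impose \<sigma> (parity_class P) = parity_class P"
proof -
  assume \<sigma>: "\<sigma> \<in> hc_X K L" and P: "P \<le> 1"
  have "w \<in> parity_class P" if w: "w \<in> \<sigma>" "w \<notin> nbrs (parity_class P)" for w
  proof (rule ccontr)
    assume "w \<notin> parity_class P"
    moreover have ws: "w \<in> sites K L" using w \<sigma> unfolding hc_X_iff by blast
    ultimately have "parity w = 1 - P" using P parity_le_1[of w] unfolding parity_class_def by auto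
    obtain u where u: "u \<in> sites K L" "cyl_adj K u w" using exists_cyl_adj[OF ws] by blast
    hence "parity u = P" using parity_cyl_adj_other[OF P \<open>parity w = 1 - P\<close>] cyl_adj_sym by blast
    hence "w \<in> nbrs (parity_class P)" using u ws unfolding nbrs_def parity_class_def by blast
    thus False using w by blast
  qed
  thus ?thesis unfolding impose_def by blast
qed

text \<open>Starting from any \<open>\<sigma>\<close>, impose the sites of parity \<open>P\<close> one at a time in the order \<open>\<rho>\<close>.
  A particle removed at a neighbour \<open>w\<close> is paid for by the already imposed site \<open>\<phi> w\<close>, except
  for \<open>w \<in> E\<close>; so no configuration on the way has more than \<open>|\<sigma> \<inter> E|\<close> particles fewer than
  \<open>\<sigma>\<close>, and one more is lost while a particle moves.\<close>

lemma reach_parity_class: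
  fixes \<rho> :: "nat \<times> nat \<Rightarrow> nat" and \<phi> :: "nat \<times> nat \<Rightarrow> nat \<times> nat"
  assumes \<sigma>: "\<sigma> \<in> hc_X K L" and P: "P \<le> 1"
    and inj_\<rho>: "inj_on \<rho> (parity_class P)"
    and \<phi>: "\<And>w. w \<in> parity_class (1 - P) - E \<Longrightarrow> \<phi> w \<in> parity_class P \<and> cyl_adj K w (\<phi> w)"
    and inj_\<phi>: "inj_on \<phi> (parity_class (1 - P) - E)"
    and earlier: "\<And>w v. w \<in> parity_class (1 - P) - E \<Longrightarrow> v \<in> parity_class P \<Longrightarrow> cyl_adj K v w \<Longrightarrow>
      \<rho> (\<phi> w) \<le> \<rho> v"
  shows "reach (hc_H \<sigma> + int (card (\<sigma> \<inter> E)) + 1) \<sigma> (parity_class P)"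
proof -
  define V where "V t = {v \<in> parity_class P. \<rho> v < t}" for t
  let ?h = "hc_H \<sigma> + int (card (\<sigma> \<inter> E)) + 1"
  have V: "V t \<subseteq> parity_class P" for t unfolding V_def by blast
  have closed: "\<phi> w \<in> V t" if w: "w \<in> nbrs (V t)" "w \<in> parity_class (1 - P) - E" for t w
  proof -
    obtain v where v: "v \<in> V t" "cyl_adj K v w" using w(1) unfolding nbrs_def by blast
    hence "\<rho> (\<phi> w) < t" using earlier[OF w(2) _ v(2)] unfolding V_def by fastforce
    thus ?thesis using \<phi>[OF w(2)] unfolding V_def by simp
  qed
  have reach_V: "reach ?h \<sigma> (impose \<sigma> (V t))" for t
  proof (induction t)
    case 0
    have "V 0 = {}" unfolding V_def by simp
    thus ?case using impose_empty reach_le_refl[OF \<sigma>] by simp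
  next
    case (Suc t)
    show ?case
    proof (cases "\<exists>v\<in>parity_class P. \<rho> v = t")
      case True
      then obtain v where v: "v \<in> parity_class P" "\<rho> v = t" by blast
      hence "V (Suc t) = insert v (V t)"
        using inj_\<rho> unfolding V_def inj_on_def by (auto simp: less_Suc_eq)
      moreover have "card \<sigma> \<le> card (impose \<sigma> (insert v (V t))) + card (\<sigma> \<inter> E)"
        using card_le_impose[OF \<sigma> P V[of "Suc t"] \<phi> inj_\<phi> closed] calculation by simp
      hence "reach ?h (impose \<sigma> (V t)) (impose \<sigma> (insert v (V t)))"
        by (rule reach_impose_insert[OF \<sigma> P V v(1)])
      ultimately show ?thesis using reach_le_trans[OF Suc.IH] by simp
    next
      case False
      hence "V (Suc t) = V t" unfolding V_def using less_Suc_eq by auto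
      thus ?thesis using Suc.IH by simp
    qed
  qed
  have "V (Suc (Max (\<rho> ` parity_class P))) = parity_class P"
    using finite_parity_class unfolding V_def by (auto simp: less_Suc_eq_le)
  thus ?thesis using reach_V impose_parity_class[OF \<sigma> P] by metis
qed

end

lemma mult_add_eq_mult_addD: "(a::nat) * M + b = c * M + d \<Longrightarrow> b < M \<Longrightarrow> d < M \<Longrightarrow> a = c \<and> b = d"
proof -
  assume e: "a * M + b = c * M + d" and b: "b < M" "d < M"
  have "(a * M + b) div M = a" using b by simp
  moreover have "(c * M + d) div M = c" using b by simp
  moreover have "(a * M + b) mod M = b" using b by simp
  moreover have "(c * M + d) mod M = d" using b by simp
  ultimately show ?thesis using e by metis
qed

context cylinder
begin

text \<open>Sites of the other parity that cannot be charged to a neighbour imposed before them: the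
  first column in a column-by-column sweep, and the rows \<open>0\<close> and \<open>K - 1\<close>, adjacent across the
  seam, in a row-by-row sweep.\<close>

definition column_exceptions :: "nat \<Rightarrow> (nat \<times> nat) set" where
  "column_exceptions P = {w \<in> parity_class (1 - P). fst w = 0}"

definition rim_exceptions :: "nat \<Rightarrow> (nat \<times> nat) set" where
  "rim_exceptions P = {w \<in> parity_class (1 - P). snd w = 0 \<or> snd w = K - 1}"

lemma column_predecessor:
  assumes P: "P \<le> 1" and w: "w \<in> parity_class (1 - P)" "fst w \<noteq> 0"
  shows "(fst w - 1, snd w) \<in> parity_class P \<and> cyl_adj K w (fst w - 1, snd w)"
proof -
  have adj: "cyl_adj K w (fst w - 1, snd w)" using w(2) unfolding cyl_adj_def by simp
  moreover have "parity (fst w - 1, snd w) = P"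
    using parity_cyl_adj_other[OF P _ adj] w(1) unfolding parity_class_def by simp
  ultimately show ?thesis using w unfolding parity_class_def sites_def by (auto simp: mem_Times_iff)
qed

lemma column_rank_predecessor_le:
  assumes adj: "cyl_adj K (c', r') (c, r)" and "c \<noteq> 0" "r < K"
  shows "(c - 1) * K + r \<le> c' * K + r'"
proof (cases "c \<le> c'")
  case True
  have "(c - 1) * K + K = c * K" using \<open>c \<noteq> 0\<close> by (cases c) auto
  moreover have "c * K \<le> c' * K" using True by (rule mult_le_mono1)
  ultimately show ?thesis using \<open>r < K\<close> by linarith
next
  case False
  hence "c = c' + 1" "r' = r" using cyl_adj_cases[OF adj] by auto
  thus ?thesis by simp
qed

lemma reach_parity_class_by_columns:
  assumes \<sigma>: "\<sigma> \<in> hc_X K L" and P: "P \<le> 1"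
  shows "reach (hc_H \<sigma> + int (card (\<sigma> \<inter> column_exceptions P)) + 1) \<sigma> (parity_class P)"
proof (rule reach_parity_class[OF \<sigma> P, of "\<lambda>v. fst v * K + snd v" _ "\<lambda>w. (fst w - 1, snd w)"])
  show "inj_on (\<lambda>v. fst v * K + snd v) (parity_class P)"
    by (rule inj_onI) (auto simp: parity_class_def sites_def prod_eq_iff dest: mult_add_eq_mult_addD)
  show "inj_on (\<lambda>w. (fst w - 1, snd w)) (parity_class (1 - P) - column_exceptions P)"
    by (rule inj_onI) (auto simp: column_exceptions_def prod_eq_iff)
next
  fix w assume "w \<in> parity_class (1 - P) - column_exceptions P"
  thus "(fst w - 1, snd w) \<in> parity_class P \<and> cyl_adj K w (fst w - 1, snd w)"
    using column_predecessor[OF P] unfolding column_exceptions_def by blast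
next
  fix w v assume w: "w \<in> parity_class (1 - P) - column_exceptions P" and "cyl_adj K v w"
  moreover have "fst w \<noteq> 0" "snd w < K"
    using w unfolding column_exceptions_def parity_class_def sites_def by auto
  ultimately show "fst (fst w - 1, snd w) * K + snd (fst w - 1, snd w) \<le> fst v * K + snd v"
    using column_rank_predecessor_le[of "fst v" "snd v" "fst w" "snd w"] by simp
qed

lemma card_column_exceptions: "card (column_exceptions P) \<le> n"
proof -
  have "column_exceptions P \<subseteq> (\<lambda>i. (0, 2*i + (1 - P) mod 2)) ` {0..<n}"
  proof
    fix w assume w: "w \<in> column_exceptions P"
    obtain c r where cr: "w = (c,r)" by (cases w) auto
    have b: "c = 0" "r < K" "parity w = 1 - P" using w cr unfolding column_exceptions_def parity_class_def sites_def by auto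
    have "r mod 2 = (1 - P) mod 2" using b(1,3) cr unfolding parity_def by simp
    moreover have "r = 2 * (r div 2) + r mod 2" by (rule mult_div_mod_eq[symmetric])
    ultimately have r: "r = 2 * (r div 2) + (1 - P) mod 2" by simp
    have "r div 2 \<in> {0..<n}" using b(2) K_eq by simp
    moreover have "w = (\<lambda>i. (0, 2*i + (1 - P) mod 2)) (r div 2)" using cr b(1) r by simp
    ultimately show "w \<in> (\<lambda>i. (0, 2*i + (1 - P) mod 2)) ` {0..<n}" by (rule rev_image_eqI)
  qed
  hence "card (column_exceptions P) \<le> card ((\<lambda>i. (0::nat, 2*i + (1 - P) mod 2)) ` {0..<n})"
    by (rule card_mono[OF finite_imageI[OF finite_atLeastLessThan]])
  also have "\<dots> \<le> n" using card_image_le[of "{0..<n}"] by simp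
  finally show ?thesis .
qed

lemma finite_column_exceptions: "finite (column_exceptions P)"
  unfolding column_exceptions_def using finite_parity_class by simp

lemma row_predecessor:
  assumes P: "P \<le> 1" and w: "w \<in> parity_class (1 - P)" "snd w \<noteq> 0"
  shows "(fst w, snd w - 1) \<in> parity_class P \<and> cyl_adj K w (fst w, snd w - 1)"
proof -
  have adj: "cyl_adj K w (fst w, snd w - 1)" using w(2) unfolding cyl_adj_def by simp
  moreover have "parity (fst w, snd w - 1) = P"
    using parity_cyl_adj_other[OF P _ adj] w(1) unfolding parity_class_def by simp
  ultimately show ?thesis using w unfolding parity_class_def sites_def by (auto simp: mem_Times_iff)
qed

lemma row_rank_predecessor_le:
  assumes adj: "cyl_adj K (c', r') (c, r)" and "r \<noteq> 0" "r \<noteq> K - 1" "c < L"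
  shows "(r - 1) * L + c \<le> r' * L + c'"
proof (cases "r \<le> r'")
  case True
  have "(r - 1) * L + L = r * L" using \<open>r \<noteq> 0\<close> by (cases r) auto
  moreover have "r * L \<le> r' * L" using True by (rule mult_le_mono1)
  ultimately show ?thesis using \<open>c < L\<close> by linarith
next
  case False
  have "{r', r} \<noteq> {0, K - 1}" using \<open>r \<noteq> 0\<close> \<open>r \<noteq> K - 1\<close> by (auto simp: doubleton_eq_iff)
  hence "r = r' + 1" "c' = c" using cyl_adj_cases[OF adj] False by auto
  thus ?thesis by simp
qed

lemma reach_parity_class_by_rows:
  assumes \<sigma>: "\<sigma> \<in> hc_X K L" and P: "P \<le> 1"
  shows "reach (hc_H \<sigma> + int (card (\<sigma> \<inter> rim_exceptions P)) + 1) \<sigma> (parity_class P)"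
proof (rule reach_parity_class[OF \<sigma> P, of "\<lambda>v. snd v * L + fst v" _ "\<lambda>w. (fst w, snd w - 1)"])
  show "inj_on (\<lambda>v. snd v * L + fst v) (parity_class P)"
    by (rule inj_onI) (auto simp: parity_class_def sites_def prod_eq_iff dest: mult_add_eq_mult_addD)
  show "inj_on (\<lambda>w. (fst w, snd w - 1)) (parity_class (1 - P) - rim_exceptions P)"
    by (rule inj_onI) (auto simp: rim_exceptions_def prod_eq_iff)
next
  fix w assume "w \<in> parity_class (1 - P) - rim_exceptions P"
  thus "(fst w, snd w - 1) \<in> parity_class P \<and> cyl_adj K w (fst w, snd w - 1)"
    using row_predecessor[OF P] unfolding rim_exceptions_def by blast
next
  fix w v assume w: "w \<in> parity_class (1 - P) - rim_exceptions P" and "cyl_adj K v w"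
  moreover have "snd w \<noteq> 0" "snd w \<noteq> K - 1" "fst w < L"
    using w unfolding rim_exceptions_def parity_class_def sites_def by auto
  ultimately show "snd (fst w, snd w - 1) * L + fst (fst w, snd w - 1) \<le> snd v * L + fst v"
    using row_rank_predecessor_le[of "fst v" "snd v" "fst w" "snd w"] by simp
qed

lemma card_rim_exceptions: "card (rim_exceptions P) \<le> L"
proof -
  define g where "g c = (if parity (c,0) = 1 - P then (c,0) else (c, K - 1))" for c
  have "rim_exceptions P \<subseteq> g ` {0..<L}"
  proof
    fix w assume w: "w \<in> rim_exceptions P"
    obtain c r where cr: "w = (c,r)" by (cases w) auto
    have b: "c < L" "r = 0 \<or> r = K - 1" "parity w = 1 - P" using w cr unfolding rim_exceptions_def parity_class_def sites_def by auto
    have "w = g c"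
    proof (cases "r = 0")
      case True thus ?thesis using cr b(3) unfolding g_def by simp
    next
      case False
      hence r: "r = K - 1" using b(2) by simp
      have "parity (c, K - 1) \<noteq> parity (c, 0)" using parity_cyl_adj[OF cyl_adj_wrap] .
      hence "parity (c, 0) \<noteq> 1 - P" using b(3) cr r by simp
      thus ?thesis using cr r unfolding g_def by simp
    qed
    moreover have "c \<in> {0..<L}" using b(1) by simp
    ultimately show "w \<in> g ` {0..<L}" by (rule image_eqI)
  qed
  hence "card (rim_exceptions P) \<le> card (g ` {0..<L})"
    by (rule card_mono[OF finite_imageI[OF finite_atLeastLessThan]])
  also have "\<dots> \<le> L" using card_image_le[of "{0..<L}" g] by simp
  finally show ?thesis .
qed

lemma finite_rim_exceptions: "finite (rim_exceptions P)"
  unfolding rim_exceptions_def using finite_parity_class by simp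

end

context cylinder
begin

lemma reach_parity_class_within_barrier:
  assumes \<sigma>: "\<sigma> \<in> hc_X K L" and P: "P \<le> 1"
  obtains E where "finite E" "card E \<le> barrier"
    "\<And>w. w \<in> parity_class (1 - P) \<Longrightarrow> fst w = 0 \<Longrightarrow> snd w = 0 \<or> snd w = K - 1 \<Longrightarrow> w \<in> E"
    "reach (hc_H \<sigma> + int (card (\<sigma> \<inter> E)) + 1) \<sigma> (parity_class P)"
proof (cases "n \<le> L")
  case True
  thus thesis using that[OF finite_column_exceptions _ _ reach_parity_class_by_columns[OF \<sigma> P]]
      card_column_exceptions[of P] unfolding column_exceptions_def by simp
next
  case False
  thus thesis using that[OF finite_rim_exceptions _ _ reach_parity_class_by_rows[OF \<sigma> P]]
      card_rim_exceptions[of P] unfolding rim_exceptions_def by simp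
qed

lemma descent_to_checkerboard:
  assumes \<sigma>: "\<sigma> \<in> hc_X K L"
  shows "\<exists>P\<le>1. reach (hc_H \<sigma> + int barrier) \<sigma> (parity_class P)"
proof -
  have corner_sites: "(0, 0) \<in> parity_class 0" "(0, K - 1) \<in> parity_class 1"
    using parity_cyl_adj[OF cyl_adj_wrap[of 0]] parity_le_1[of "(0, K - 1)"] K_ge_2 L_ge_2
    unfolding parity_class_def sites_def parity_def by auto
  obtain P w where P: "P \<le> 1" and w: "w \<in> parity_class (1 - P)" "fst w = 0"
    "snd w = 0 \<or> snd w = K - 1" "w \<notin> \<sigma>"
  proof (cases "(0, K - 1) \<in> \<sigma>")
    case True
    hence "(0, 0) \<notin> \<sigma>" using hc_X_not_adj[OF \<sigma>] cyl_adj_wrap by blast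
    thus thesis using that[of 1 "(0, 0)"] corner_sites by simp
  next
    case False
    thus thesis using that[of 0 "(0, K - 1)"] corner_sites by simp
  qed
  obtain E where E: "finite E" "card E \<le> barrier" "w \<in> E"
    and reach_P: "reach (hc_H \<sigma> + int (card (\<sigma> \<inter> E)) + 1) \<sigma> (parity_class P)"
    using reach_parity_class_within_barrier[OF \<sigma> P] w by metis
  have "card (\<sigma> \<inter> E) < card E" using E(1,3) w(4) by (intro psubset_card_mono) auto
  hence "hc_H \<sigma> + int (card (\<sigma> \<inter> E)) + 1 \<le> hc_H \<sigma> + int barrier" using E(2) by linarith
  thus ?thesis using reach_le_mono[OF reach_P] P by blast
qed

lemma reach_even_odd:
  "reach (hc_H (even_conf K L) + int barrier + 1) (even_conf K L) (odd_conf K L)"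
proof -
  obtain E where E: "finite E" "card E \<le> barrier"
    and reach_1: "reach (hc_H (parity_class 0) + int (card (parity_class 0 \<inter> E)) + 1)
      (parity_class 0) (parity_class 1)"
    using reach_parity_class_within_barrier[OF parity_class_in_hc_X order_refl[of 1]] by metis
  have "card (parity_class 0 \<inter> E) \<le> barrier" using card_mono[OF E(1), of "parity_class 0 \<inter> E"] E(2) by simp
  thus ?thesis using reach_le_mono[OF reach_1] unfolding even_conf_eq odd_conf_eq by simp
qed

lemma Phi_even_odd:
  "Phi (hc_X K L) hc_H (hc_q K L) (even_conf K L) (odd_conf K L) = hc_H (even_conf K L) + int barrier + 1"
  using Phi_le[OF reach_even_odd] Phi_even_odd_ge by linarith

theorem hard_core_Gamma_values:
  "GammaTilde (hc_X K L) hc_H (hc_q K L) (hc_X K L - {even_conf K L, odd_conf K L}) \<le> int barrier \<and>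
   GammaA (hc_X K L) hc_H (hc_q K L) (even_conf K L) {odd_conf K L} = int barrier + 1 \<and>
   GammaTilde (hc_X K L) hc_H (hc_q K L) (hc_X K L - {odd_conf K L}) = int barrier + 1"
proof -
  have in_X: "even_conf K L \<in> hc_X K L" "odd_conf K L \<in> hc_X K L"
    unfolding even_conf_eq odd_conf_eq by (rule parity_class_in_hc_X)+
  interpret ground_state_landscape "hc_X K L" hc_H "hc_q K L" "even_conf K L" "odd_conf K L"
    by unfold_locales (use in_X hc_H_ge_even_conf Phi_even_odd in auto)
  have descent: "\<exists>y\<in>{even_conf K L, odd_conf K L}. Phi (hc_X K L) hc_H (hc_q K L) x y \<le> hc_H x + int barrier"
    if x: "x \<in> hc_X K L" for x
  proof -
    obtain P where "P \<le> 1" "reach (hc_H x + int barrier) x (parity_class P)"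
      using descent_to_checkerboard[OF x] by blast
    moreover from \<open>P \<le> 1\<close> have "P = 0 \<or> P = 1" by auto
    hence "parity_class P \<in> {even_conf K L, odd_conf K L}"
      unfolding even_conf_eq odd_conf_eq by blast
    ultimately show ?thesis using Phi_le by blast
  qed
  have "{} \<in> hc_X K L" "{} \<noteq> even_conf K L" "{} \<noteq> odd_conf K L"
    using even_site_in_parity_class[of 0 0] odd_site_in_parity_class[of 0 0] L_ge_2 n_pos
    unfolding hc_X_iff even_conf_eq odd_conf_eq by auto
  thus ?thesis using Gamma_values[OF descent] Phi_even_odd by simp
qed

end

theorem theorem5p3:
  fixes K L :: nat
  assumes "K \<ge> 2" and "L \<ge> 2" and "even K"
  shows "GammaTilde (hc_X K L) hc_H (hc_q K L) (hc_X K L - {even_conf K L, odd_conf K L})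
           \<le> min (int K div 2) (int L) \<and>
         GammaA (hc_X K L) hc_H (hc_q K L) (even_conf K L) {odd_conf K L}
           = min (int K div 2) (int L) + 1 \<and>
         GammaTilde (hc_X K L) hc_H (hc_q K L) (hc_X K L - {odd_conf K L})
           = min (int K div 2) (int L) + 1"
proof -
  interpret cylinder K L using assms by unfold_locales
  have "int K div 2 = int (K div 2)" by (simp add: zdiv_int)
  hence "int (min (K div 2) L) = min (int K div 2) (int L)" by linarith
  thus ?thesis using hard_core_Gamma_values by simp
qed

end
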